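(* In the category of finite-dimensional left $B_\varpi$-modules, the objects $\{V_g\}_{g\in I}$ with involution $g\mapsto g^*=g^{-1}$ and the morphisms $d_g$, $b_g$ form a $\Psi$-system, and for $f,g,h\in I$, $\dim\operatorname{Hom}_{B_\varpi}(V_h,V_f\otimes V_g)=N$ if $h=fg$ and $0$ otherwise.
   Context: $N\ge1$ is an integer, $\varpi\in\mathbb C$ a primitive $N$-th root of unity, $\mathbb Z_N=\mathbb Z/N\mathbb Z$. $B_\varpi$ is the Hopf algebra over $\mathbb C$ generated by $a^{\pm1},b$ with $ab=\varpi ba$, $\Delta(a)=a\otimes a$, $\Delta(b)=a\otimes b+b\otimes1$. $G=\mathbb R\times\mathbb R_{>0}$ with group law $(x,y)(u,v)=(x+yu,yv)$; $I=G\setminus(\{0\}\times\mathbb R_{>0})=I_+\sqcup I_-$ with $I_\pm=\{(x,y):\pm x>0\}$. Fix $\epsilon\in\mathbb C$ with $\epsilon^N=-1$ ($\epsilon=-1$ if $N$ is odd). Define $\sqrt[N]{x}$ for real $x$ as the positive root for $x>0$ and $\epsilon\sqrt[N]{-x}$ for $x<0$. For $g=(x,y)\in G$ let $u_g=\sqrt[N]{y}$, $v_g=\sqrt[N]{x}$; for $g\in I_\pm$ let $\epsilon_g=\epsilon^{\pm1}$. For $g\in I$, $V_g$ is the $N$-dimensional module with basis $\{w_i\}_{i\in\mathbb Z_N}$, $aw_i=u_g\varpi^iw_i$, $bw_i=v_gw_{i+1}$. Set $\Phi_{g,m}=(-\epsilon_g)^m\varpi^{m(m-1)/2}$ and $\overline\Phi_{g,m}=1/\Phi_{g,m}$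 for $m\in\mathbb Z_N$. Define $d_g:V_g\otimes V_{g^*}\to\mathbb C$ by $d_g(w_i\otimes w_j)=\Phi_{g,i}$ if $i+j=0$ and $0$ otherwise, and $b_g:\mathbb C\to V_g\otimes V_{g^*}$ by $b_g(1)=\sum_{i\in\mathbb Z_N}\overline\Phi_{g^*,-i}w_i\otimes w_{-i}$. A $\Psi$-system in a monoidal Ab-category with field ground ring consists of simple objects $\{V_i\}_{i\in I}$ with $\operatorname{Hom}(V_i,V_j)=0$ for $i\ne j$, an involution $i\mapsto i^*$, morphisms $b_i:\mathbb I\to V_i\otimes V_{i^*}$, $d_i:V_i\otimes V_{i^*}\to\mathbb I$ with $(\mathrm{Id}_{V_i}\otimes d_{i^*})(b_i\otimes\mathrm{Id}_{V_i})=\mathrm{Id}_{V_i}=(d_i\otimes\mathrm{Id}_{V_i})(\mathrm{Id}_{V_i}\otimes b_{i^*})$, and such that whenever $\operatorname{Hom}(V_k,V_i\otimes V_j)\ne0$ for some $k$, $\mathrm{Id}_{V_i\otimes V_j}$ lies in the image of $\bigoplus_k\operatorname{Hom}(V_k,V_i\otimes V_j)\otimes\operatorname{Hom}(V_i\otimes V_j,V_k)\to\operatorname{End}(V_i\otimes V_j)$, $x\otimes y\mapsto x\circ y$. *)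

theory Defs
  imports Complex_Main "HOL-Library.Function_Algebras"
begin

text \<open>A finite-dimensional left B-module is given by a finite basis index set
  (the carrier) and the matrices of the generators a and b in that basis.
  Linear maps are matrices M :: 'r => 'c => complex (row index first),
  required to vanish outside the relevant index sets.\<close>

record 'i rep =
  car  :: "'i set"
  actA :: "'i \<Rightarrow> 'i \<Rightarrow> complex"
  actB :: "'i \<Rightarrow> 'i \<Rightarrow> complex"

definition mcomp :: "'b set \<Rightarrow> ('a \<Rightarrow> 'b \<Rightarrow> complex) \<Rightarrow> ('b \<Rightarrow> 'c \<Rightarrow> complex) \<Rightarrow> 'a \<Rightarrow> 'c \<Rightarrow> complex" where
  "mcomp S f g = (\<lambda>p r. \<Sum>q\<in>S. f p q * g q r)"

definition mid :: "'a set \<Rightarrow> 'a \<Rightarrow> 'a \<Rightarrow> complex" where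
  "mid S = (\<lambda>p q. if p \<in> S \<and> q = p then 1 else 0)"

definition kron :: "('a \<Rightarrow> 'b \<Rightarrow> complex) \<Rightarrow> ('c \<Rightarrow> 'd \<Rightarrow> complex) \<Rightarrow> ('a \<times> 'c) \<Rightarrow> ('b \<times> 'd) \<Rightarrow> complex" where
  "kron f g = (\<lambda>(p1, p2) (q1, q2). f p1 q1 * g p2 q2)"

definition mapp :: "'b set \<Rightarrow> ('a \<Rightarrow> 'b \<Rightarrow> complex) \<Rightarrow> ('b \<Rightarrow> complex) \<Rightarrow> 'a \<Rightarrow> complex" where
  "mapp S M v = (\<lambda>p. \<Sum>q\<in>S. M p q * v q)"

definition is_module :: "complex \<Rightarrow> 'i rep \<Rightarrow> bool" where
  "is_module w V \<longleftrightarrow> finite (car V)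
     \<and> (\<forall>p q. (p \<notin> car V \<or> q \<notin> car V) \<longrightarrow> actA V p q = 0 \<and> actB V p q = 0)
     \<and> (\<exists>A'. \<forall>p\<in>car V. \<forall>q\<in>car V.
            mcomp (car V) (actA V) A' p q = mid (car V) p q \<and> mcomp (car V) A' (actA V) p q = mid (car V) p q)
     \<and> (\<forall>p\<in>car V. \<forall>q\<in>car V. mcomp (car V) (actA V) (actB V) p q = w * mcomp (car V) (actB V) (actA V) p q)"

text \<open>Tensor product via the coproduct Delta(a) = a (x) a, Delta(b) = a (x) b + b (x) 1.\<close>
definition tensor :: "'i rep \<Rightarrow> 'j rep \<Rightarrow> ('i \<times> 'j) rep" where
  "tensor V W = \<lparr> car = car V \<times> car W,
     actA = kron (actA V) (actA W),
     actB = (\<lambda>P Q. kron (actA V) (actB W) P Q + kron (actB V) (mid (car W)) P Q) \<rparr>"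

text \<open>Unit object: C with the counit action a = 1, b = 0.\<close>
definition unitrep :: "unit rep" where
  "unitrep = \<lparr> car = UNIV, actA = (\<lambda>_ _. 1), actB = (\<lambda>_ _. 0) \<rparr>"

text \<open>Module morphisms V -> W (matrices with rows indexed by W, columns by V).\<close>
definition Hom :: "'i rep \<Rightarrow> 'j rep \<Rightarrow> ('j \<Rightarrow> 'i \<Rightarrow> complex) set" where
  "Hom V W = {f. (\<forall>p q. f p q \<noteq> 0 \<longrightarrow> p \<in> car W \<and> q \<in> car V)
     \<and> (\<forall>p\<in>car W. \<forall>q\<in>car V. mcomp (car W) (actA W) f p q = mcomp (car V) f (actA V) p q)
     \<and> (\<forall>p\<in>car W. \<forall>q\<in>car V. mcomp (car W) (actB W) f p q = mcomp (car V) f (actB V) p q)}"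

definition cdim :: "('a \<Rightarrow> 'b \<Rightarrow> complex) set \<Rightarrow> nat" where
  "cdim U = vector_space.dim (\<lambda>c f. (\<lambda>p q. c * f p q)) U"

definition vecs :: "'i rep \<Rightarrow> ('i \<Rightarrow> complex) set" where
  "vecs V = {v. \<forall>p. p \<notin> car V \<longrightarrow> v p = 0}"

definition invariant :: "'i rep \<Rightarrow> ('i \<Rightarrow> complex) set \<Rightarrow> bool" where
  "invariant V U \<longleftrightarrow> U \<subseteq> vecs V \<and> (\<lambda>_. 0) \<in> U
     \<and> (\<forall>u\<in>U. \<forall>v\<in>U. (\<lambda>p. u p + v p) \<in> U)
     \<and> (\<forall>c. \<forall>u\<in>U. (\<lambda>p. c * u p) \<in> U)
     \<and> (\<forall>u\<in>U. mapp (car V) (actA V) u \<in> U \<and> mapp (car V) (actB V) u \<in> U)"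

definition simple :: "'i rep \<Rightarrow> bool" where
  "simple V \<longleftrightarrow> car V \<noteq> {} \<and> (\<forall>U. invariant V U \<longrightarrow> U = {\<lambda>_. 0} \<or> U = vecs V)"

definition lunit_inv :: "'i set \<Rightarrow> (unit \<times> 'i) \<Rightarrow> 'i \<Rightarrow> complex" where
  "lunit_inv S = (\<lambda>(_, p) q. mid S p q)"
definition lunit :: "'i set \<Rightarrow> 'i \<Rightarrow> (unit \<times> 'i) \<Rightarrow> complex" where
  "lunit S = (\<lambda>p (_, q). mid S p q)"
definition runit_inv :: "'i set \<Rightarrow> ('i \<times> unit) \<Rightarrow> 'i \<Rightarrow> complex" where
  "runit_inv S = (\<lambda>(p, _) q. mid S p q)"
definition runit :: "'i set \<Rightarrow> 'i \<Rightarrow> ('i \<times> unit) \<Rightarrow> complex" where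
  "runit S = (\<lambda>p (q, _). mid S p q)"
definition assoc :: "('a \<times> 'b \<times> 'c) set \<Rightarrow> ('a \<times> 'b \<times> 'c) \<Rightarrow> (('a \<times> 'b) \<times> 'c) \<Rightarrow> complex" where
  "assoc S = (\<lambda>(p1, p2, p3) ((q1, q2), q3). mid S (p1, p2, p3) (q1, q2, q3))"
definition assoc_inv :: "(('a \<times> 'b) \<times> 'c) set \<Rightarrow> (('a \<times> 'b) \<times> 'c) \<Rightarrow> ('a \<times> 'b \<times> 'c) \<Rightarrow> complex" where
  "assoc_inv S = (\<lambda>((p1, p2), p3) (q1, q2, q3). mid S ((p1, p2), p3) ((q1, q2), q3))"

definition psi_system ::
  "complex \<Rightarrow> 'g set \<Rightarrow> ('g \<Rightarrow> 'i rep) \<Rightarrow> ('g \<Rightarrow> 'g)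
   \<Rightarrow> ('g \<Rightarrow> ('i \<times> 'i) \<Rightarrow> unit \<Rightarrow> complex) \<Rightarrow> ('g \<Rightarrow> unit \<Rightarrow> ('i \<times> 'i) \<Rightarrow> complex) \<Rightarrow> bool" where
  "psi_system w I V st bm dm \<longleftrightarrow>
     (\<forall>i\<in>I. is_module w (V i) \<and> simple (V i))
   \<and> (\<forall>i\<in>I. \<forall>j\<in>I. i \<noteq> j \<longrightarrow> Hom (V i) (V j) = {\<lambda>_ _. 0})
   \<and> (\<forall>i\<in>I. st i \<in> I \<and> st (st i) = i)
   \<and> (\<forall>i\<in>I. bm i \<in> Hom unitrep (tensor (V i) (V (st i)))
            \<and> dm i \<in> Hom (tensor (V i) (V (st i))) unitrep)
   \<and> (\<forall>i\<in>I. let S = car (V i); S' = car (V (st i)) in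
        mcomp (S \<times> UNIV) (runit S)
          (mcomp (S \<times> S' \<times> S) (kron (mid S) (dm (st i)))
            (mcomp ((S \<times> S') \<times> S) (assoc (S \<times> S' \<times> S))
              (mcomp (UNIV \<times> S) (kron (bm i) (mid S)) (lunit_inv S)))) = mid S
      \<and> mcomp (UNIV \<times> S) (lunit S)
          (mcomp ((S \<times> S') \<times> S) (kron (dm i) (mid S))
            (mcomp (S \<times> S' \<times> S) (assoc_inv ((S \<times> S') \<times> S))
              (mcomp (S \<times> UNIV) (kron (mid S) (bm (st i))) (runit_inv S)))) = mid S)
   \<and> (\<forall>i\<in>I. \<forall>j\<in>I. (\<exists>k\<in>I. Hom (V k) (tensor (V i) (V j)) \<noteq> {\<lambda>_ _. 0}) \<longrightarrow>
        (\<exists>L :: ('g \<times> (('i \<times> 'i) \<Rightarrow> 'i \<Rightarrow> complex) \<times> ('i \<Rightarrow> ('i \<times> 'i) \<Rightarrow> complex)) list.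
           (\<forall>(k, x, y)\<in>set L. k \<in> I \<and> x \<in> Hom (V k) (tensor (V i) (V j))
                              \<and> y \<in> Hom (tensor (V i) (V j)) (V k))
         \<and> mid (car (V i) \<times> car (V j))
             = sum_list (map (\<lambda>(k, x, y). mcomp (car (V k)) x y) L)))"

definition Gset :: "(real \<times> real) set" where
  "Gset = {(x, y). y > 0}"

definition gmul :: "real \<times> real \<Rightarrow> real \<times> real \<Rightarrow> real \<times> real" where
  "gmul g h = (fst g + snd g * fst h, snd g * snd h)"

definition ginv :: "real \<times> real \<Rightarrow> real \<times> real" where
  "ginv g = (- fst g / snd g, 1 / snd g)"

definition Iset :: "(real \<times> real) set" where
  "Iset = {(x, y). y > 0 \<and> x \<noteq> 0}"

definition nrt :: "nat \<Rightarrow> complex \<Rightarrow> real \<Rightarrow> complex" where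
  "nrt N eps x = (if x > 0 then complex_of_real (root N x)
                  else if x < 0 then eps * complex_of_real (root N (- x)) else 0)"

definition ug :: "nat \<Rightarrow> complex \<Rightarrow> real \<times> real \<Rightarrow> complex" where
  "ug N eps g = nrt N eps (snd g)"
definition vg :: "nat \<Rightarrow> complex \<Rightarrow> real \<times> real \<Rightarrow> complex" where
  "vg N eps g = nrt N eps (fst g)"
definition epsg :: "complex \<Rightarrow> real \<times> real \<Rightarrow> complex" where
  "epsg eps g = (if fst g > 0 then eps else inverse eps)"

text \<open>V_g with basis w_0..w_{N-1} (indices are representatives of Z_N):
  a w_i = u_g varpi^i w_i, b w_i = v_g w_{i+1}.\<close>
definition Vmod :: "nat \<Rightarrow> complex \<Rightarrow> complex \<Rightarrow> real \<times> real \<Rightarrow> nat rep" where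
  "Vmod N w eps g = \<lparr> car = {..<N},
     actA = (\<lambda>i j. if i < N \<and> j = i then ug N eps g * w ^ i else 0),
     actB = (\<lambda>i j. if i < N \<and> j < N \<and> i = (j + 1) mod N then vg N eps g else 0) \<rparr>"

definition Phi :: "complex \<Rightarrow> complex \<Rightarrow> real \<times> real \<Rightarrow> nat \<Rightarrow> complex" where
  "Phi w eps g m = (- epsg eps g) ^ m * w ^ (m * (m - 1) div 2)"

definition Phibar :: "complex \<Rightarrow> complex \<Rightarrow> real \<times> real \<Rightarrow> nat \<Rightarrow> complex" where
  "Phibar w eps g m = 1 / Phi w eps g m"

definition dmap :: "nat \<Rightarrow> complex \<Rightarrow> complex \<Rightarrow> real \<times> real \<Rightarrow> unit \<Rightarrow> nat \<times> nat \<Rightarrow> complex" where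
  "dmap N w eps g = (\<lambda>_ (i, j). if i < N \<and> j < N \<and> (i + j) mod N = 0 then Phi w eps g i else 0)"

definition bmap :: "nat \<Rightarrow> complex \<Rightarrow> complex \<Rightarrow> real \<times> real \<Rightarrow> nat \<times> nat \<Rightarrow> unit \<Rightarrow> complex" where
  "bmap N w eps g = (\<lambda>(i, j) _. if i < N \<and> j < N \<and> j = (N - i) mod N
                                 then Phibar w eps (ginv g) ((N - i) mod N) else 0)"

end

theory Submission
  imports Defs
begin

(* 1. General bookkeeping: finite sums, Gaussian binomial coefficients, and a coordinate
      formula for the two snake composites of arbitrary coevaluation/evaluation matrices.
   2. In the locale primitive_root (varpi a primitive N-th root of unity, eps^N = -1):
      V_g is a simple module, and a nonzero morphism V_g -> V_h forces g = h
      (compare the N-th powers of the eigenvalues of a and of b).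
   3. On V_f (x) V_g, the elements a (x) b and b (x) 1 varpi-commute, so by the q-binomial
      theorem b^N acts as (u_f v_g)^N + v_f^N.  Hence a nonzero morphism
      V_h -> V_f (x) V_g forces h = fg; for h = fg such a morphism is determined by
      its values on w_0, and N explicit inclusions incl_r, with projections proj_r,
      give a basis of the Hom space and a decomposition of the identity.
   4. b_g and d_g are morphisms satisfying the snake identities.
   The theorem collects these facts; the convention eps = -1 for odd N is not needed. *)

lemma sum_single:
  assumes "finite A" "a \<in> A" "\<And>r. r \<in> A \<Longrightarrow> r \<noteq> a \<Longrightarrow> f r = 0"
  shows "sum f A = f a"
  using assms by (subst sum.mono_neutral_right[of A "{a}"]) auto

lemma sum_apply2: "finite A \<Longrightarrow> (\<Sum>x\<in>A. F x) p q = (\<Sum>x\<in>A. F x p q)"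
  by (induction A rule: finite_induct) auto

lemma sum_unit_prod: "(\<Sum>x\<in>(UNIV::unit set) \<times> S. f x) = (\<Sum>d\<in>S. f ((), d))"
  by (simp add: sum.cartesian_product' UNIV_unit)

lemma sum_prod_unit: "(\<Sum>x\<in>S \<times> (UNIV::unit set). f x) = (\<Sum>d\<in>S. f (d, ()))"
  by (simp add: sum.cartesian_product' UNIV_unit)

lemma sum_mid_left: "finite S \<Longrightarrow> (\<Sum>d\<in>S. mid S c d * F d) = (if c \<in> S then F c else 0)"
  by (auto simp: mid_def if_distrib[of "\<lambda>z. z * _"] cong: if_cong)

lemma sum_mid_right: "finite S \<Longrightarrow> (\<Sum>d\<in>S. F d * mid S d q) = (if q \<in> S then F q else 0)"
  by (auto simp: mid_def if_distrib[of "\<lambda>z. _ * z"] cong: if_cong)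

lemma mcomp_add_left: "mcomp S (\<lambda>P Q. K1 P Q + K2 P Q) F = (\<lambda>p r. mcomp S K1 F p r + mcomp S K2 F p r)"
  by (simp add: mcomp_def distrib_right sum.distrib fun_eq_iff)

lemma mcomp_add_right: "mcomp S F (\<lambda>P Q. K1 P Q + K2 P Q) = (\<lambda>p r. mcomp S F K1 p r + mcomp S F K2 p r)"
  by (simp add: mcomp_def distrib_left sum.distrib fun_eq_iff)

lemma Hom_zero: "(\<lambda>_ _. 0) \<in> Hom X Y"
  by (simp add: Hom_def mcomp_def)

lemma invariant_sum:
  assumes "invariant W U" "finite A" "\<And>a. a \<in> A \<Longrightarrow> F a \<in> U"
  shows "(\<lambda>p. \<Sum>a\<in>A. F a p) \<in> U"
  using assms(2,3)
proof (induction A rule: finite_induct)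
  case empty then show ?case using assms(1) by (simp add: invariant_def)
next
  case (insert a A)
  then show ?case using assms(1) unfolding invariant_def by (simp add: sum.insert)
qed

definition unit_vec :: "nat \<Rightarrow> nat \<Rightarrow> complex" where
  "unit_vec r = (\<lambda>i. if i = r then 1 else 0)"

definition mscale :: "complex \<Rightarrow> ('a \<Rightarrow> 'b \<Rightarrow> complex) \<Rightarrow> ('a \<Rightarrow> 'b \<Rightarrow> complex)" where
  "mscale = (\<lambda>c f. (\<lambda>p q. c * f p q))"

lemma vector_space_mscale: "vector_space (mscale :: complex \<Rightarrow> ('a \<Rightarrow> 'b \<Rightarrow> complex) \<Rightarrow> _)"
  by unfold_locales (auto simp: mscale_def fun_eq_iff algebra_simps)

lemma cdim_mscale: "cdim U = vector_space.dim mscale U"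
  unfolding cdim_def mscale_def ..

lemma cdim_zero: "cdim {\<lambda>_ _. 0} = 0"
proof -
  interpret vector_space mscale by (rule vector_space_mscale)
  have "dim {\<lambda>_ _. 0::complex} = (0::nat)"
    by (rule dim_unique[of "{}"]) (auto simp: fun_eq_iff zero_fun_def independent_empty)
  then show ?thesis by (simp add: cdim_mscale)
qed

(* m(m+1)/2 = m + m(m-1)/2, the exponent recursion of Phi. *)
lemma tri: "Suc m * m div 2 = m + m * (m - 1) div 2"
proof (cases m)
  case 0 then show ?thesis by simp
next
  case (Suc k)
  have "Suc m * m = m * (m - 1) + 2 * m" using Suc by (simp add: algebra_simps)
  then show ?thesis by simp
qed

fun qbinom :: "complex \<Rightarrow> nat \<Rightarrow> nat \<Rightarrow> complex" where
  "qbinom q n 0 = 1"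
| "qbinom q 0 (Suc m) = 0"
| "qbinom q (Suc n) (Suc m) = qbinom q n m + q ^ Suc m * qbinom q n (Suc m)"

lemma qbinom_above: "n < m \<Longrightarrow> qbinom q n m = 0"
proof (induction n arbitrary: m)
  case 0 then show ?case by (cases m) auto
next
  case (Suc n) then show ?case by (cases m) auto
qed

lemma qbinom_diag: "qbinom q n n = 1"
  by (induction n) (auto simp: qbinom_above)

(* The product formula, used to see that [N choose m]_varpi = 0 for 0 < m < N. *)
lemma qbinom_prod: "qbinom q n m * (\<Prod>k\<in>{1..m}. (1 - q ^ k)) = (\<Prod>k<m. (1 - q ^ (n - k)))"
proof (induction n arbitrary: m)
  case 0 then show ?case
  proof (cases m)
    case (Suc m') then show ?thesis by (simp add: prod.lessThan_Suc_shift)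
  qed simp
next
  case (Suc n)
  show ?case
  proof (cases m)
    case 0 then show ?thesis by simp
  next
    case (Suc m')
    let ?F = "\<lambda>n m. (\<Prod>k<m. (1 - q ^ (n - k)))"
    let ?P = "\<lambda>m. (\<Prod>k\<in>{1..m}. (1 - q ^ k))"
    have P: "?P (Suc m') = ?P m' * (1 - q ^ Suc m')" by (simp add: prod.nat_ivl_Suc')
    have F1: "?F n (Suc m') = ?F n m' * (1 - q ^ (n - m'))" by simp
    have F2: "?F (Suc n) (Suc m') = (1 - q ^ Suc n) * ?F n m'" by (simp only: prod.lessThan_Suc_shift) simp
    have "qbinom q (Suc n) (Suc m') * ?P (Suc m') = qbinom q n m' * ?P m' * (1 - q ^ Suc m') + q ^ Suc m' * (qbinom q n (Suc m') * ?P (Suc m'))"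
      by (simp only: qbinom.simps P) (simp add: algebra_simps)
    also have "\<dots> = ?F n m' * ((1 - q ^ Suc m') + q ^ Suc m' * (1 - q ^ (n - m')))"
      by (simp only: Suc.IH F1) (simp add: algebra_simps)
    also have "\<dots> = (1 - q ^ Suc n) * ?F n m'"
    proof (cases "m' \<le> n")
      case True
      hence h: "q ^ Suc m' * q ^ (n - m') = q ^ Suc n" by (simp add: power_add[symmetric])
      have e0: "(1 - q ^ Suc m') + q ^ Suc m' * (1 - q ^ (n - m')) = 1 - q ^ Suc m' * q ^ (n - m')"
        by (simp add: algebra_simps)
      show ?thesis by (simp only: e0 h mult.commute)
    next
      case False
      hence "?F n m' = 0" by (intro prod_zero) (auto intro!: bexI[of _ n])
      then show ?thesis by simp
    qed
    finally show ?thesis using Suc F2 by simp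
  qed
qed

lemma lunit_inv_after_kron:
  "finite S \<Longrightarrow> mcomp (UNIV \<times> S) (kron B (mid S)) (lunit_inv S) ((a, b), c) q = B (a, b) () * mid S c q"
  unfolding mcomp_def sum_unit_prod
  by (simp add: kron_def lunit_inv_def mult.assoc sum_distrib_left[symmetric] sum_mid_left) (auto simp: mid_def)

lemma runit_inv_after_kron:
  assumes "finite S"
  shows "mcomp (S \<times> UNIV) (kron (mid S) B) (runit_inv S) (a, b, c) q = B (b, c) () * mid S a q"
proof -
  have "mcomp (S \<times> UNIV) (kron (mid S) B) (runit_inv S) (a, b, c) q
      = (\<Sum>d\<in>S. B (b, c) () * (mid S a d * mid S d q))"
    unfolding mcomp_def sum_prod_unit by (simp add: kron_def runit_inv_def algebra_simps)
  also have "\<dots> = B (b, c) () * mid S a q"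
    using assms by (simp add: sum_distrib_left[symmetric] sum_mid_left) (auto simp: mid_def)
  finally show ?thesis .
qed

lemma assoc_apply:
  assumes "finite S1" "finite S2" "finite S3"
  shows "mcomp ((S1 \<times> S2) \<times> S3) (assoc (S1 \<times> S2 \<times> S3)) Z (a, b, c) q
       = (if a \<in> S1 \<and> b \<in> S2 \<and> c \<in> S3 then Z ((a, b), c) q else 0)"
proof (cases "a \<in> S1 \<and> b \<in> S2 \<and> c \<in> S3")
  case True then show ?thesis unfolding mcomp_def assoc_def
    using assms by (subst sum_single[where a="((a,b),c)"]) (auto simp: mid_def split: if_splits)
next
  case False then show ?thesis unfolding mcomp_def assoc_def
    by (auto simp: mid_def intro!: sum.neutral)
qed

lemma assoc_inv_apply:
  assumes "finite S1" "finite S2" "finite S3"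
  shows "mcomp (S1 \<times> S2 \<times> S3) (assoc_inv ((S1 \<times> S2) \<times> S3)) Z ((a, b), c) q
       = (if a \<in> S1 \<and> b \<in> S2 \<and> c \<in> S3 then Z (a, b, c) q else 0)"
proof (cases "a \<in> S1 \<and> b \<in> S2 \<and> c \<in> S3")
  case True then show ?thesis unfolding mcomp_def assoc_inv_def
    using assms by (subst sum_single[where a="(a,b,c)"]) (auto simp: mid_def split: if_splits)
next
  case False then show ?thesis unfolding mcomp_def assoc_inv_def
    by (auto simp: mid_def intro!: sum.neutral)
qed

lemma snake_left_coords:
  fixes B :: "('i \<times> 'j) \<Rightarrow> unit \<Rightarrow> complex" and D :: "unit \<Rightarrow> ('j \<times> 'i) \<Rightarrow> complex"
  assumes fin: "finite S" "finite S'"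
  shows "mcomp (S \<times> UNIV) (runit S)
          (mcomp (S \<times> S' \<times> S) (kron (mid S) D)
            (mcomp ((S \<times> S') \<times> S) (assoc (S \<times> S' \<times> S))
              (mcomp (UNIV \<times> S) (kron B (mid S)) (lunit_inv S)))) p q
   = (if p \<in> S \<and> q \<in> S then (\<Sum>b\<in>S'. D () (b, q) * B (p, b) ()) else 0)"
proof -
  define Y where "Y = mcomp ((S \<times> S') \<times> S) (assoc (S \<times> S' \<times> S))
                        (mcomp (UNIV \<times> S) (kron B (mid S)) (lunit_inv S))"
  have Y: "Y (a, b, c) q = (if a \<in> S \<and> b \<in> S' \<and> c \<in> S then B (a, b) () * mid S c q else 0)" for a b c q
    unfolding Y_def using fin by (simp add: assoc_apply lunit_inv_after_kron)
  have "mcomp (S \<times> S' \<times> S) (kron (mid S) D) Y (p, ()) q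
      = (\<Sum>a\<in>S. mid S p a * (\<Sum>b\<in>S'. \<Sum>c\<in>S. D () (b, c) * Y (a, b, c) q))"
    unfolding mcomp_def kron_def
    by (simp only: sum.cartesian_product' case_prod_conv sum_distrib_left mult.assoc)
  also have "\<dots> = (if p \<in> S then (\<Sum>b\<in>S'. \<Sum>c\<in>S. D () (b, c) * B (p, b) () * mid S c q) else 0)"
    using fin by (auto simp: sum_mid_left Y mult.assoc intro!: sum.cong)
  also have "\<dots> = (if p \<in> S \<and> q \<in> S then (\<Sum>b\<in>S'. D () (b, q) * B (p, b) ()) else 0)"
    using fin by (simp add: sum_mid_right)
  finally have X: "mcomp (S \<times> S' \<times> S) (kron (mid S) D) Y (p, ()) q
      = (if p \<in> S \<and> q \<in> S then (\<Sum>b\<in>S'. D () (b, q) * B (p, b) ()) else 0)" .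
  show ?thesis
    unfolding Y_def[symmetric] unfolding mcomp_def sum_prod_unit runit_def
    using fin X by (simp add: sum_mid_left mcomp_def)
qed

lemma snake_right_coords:
  fixes B :: "('j \<times> 'i) \<Rightarrow> unit \<Rightarrow> complex" and D :: "unit \<Rightarrow> ('i \<times> 'j) \<Rightarrow> complex"
  assumes fin: "finite S" "finite S'"
  shows "mcomp (UNIV \<times> S) (lunit S)
          (mcomp ((S \<times> S') \<times> S) (kron D (mid S))
            (mcomp (S \<times> S' \<times> S) (assoc_inv ((S \<times> S') \<times> S))
              (mcomp (S \<times> UNIV) (kron (mid S) B) (runit_inv S)))) p q
   = (if p \<in> S \<and> q \<in> S then (\<Sum>b\<in>S'. D () (q, b) * B (b, p) ()) else 0)"
proof -
  define Y where "Y = mcomp (S \<times> S' \<times> S) (assoc_inv ((S \<times> S') \<times> S))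
                        (mcomp (S \<times> UNIV) (kron (mid S) B) (runit_inv S))"
  have Y: "Y ((a, b), c) q = (if a \<in> S \<and> b \<in> S' \<and> c \<in> S then B (b, c) () * mid S a q else 0)" for a b c q
    unfolding Y_def using fin by (simp add: assoc_inv_apply runit_inv_after_kron)
  have "mcomp ((S \<times> S') \<times> S) (kron D (mid S)) Y ((), p) q
      = (\<Sum>a\<in>S. \<Sum>b\<in>S'. \<Sum>c\<in>S. mid S p c * (D () (a, b) * Y ((a, b), c) q))"
    unfolding mcomp_def kron_def
    by (simp only: sum.cartesian_product' case_prod_conv) (simp add: algebra_simps)
  also have "\<dots> = (\<Sum>c\<in>S. mid S p c * (\<Sum>a\<in>S. \<Sum>b\<in>S'. D () (a, b) * Y ((a, b), c) q))"
    by (subst sum.swap, subst (2) sum.swap) (simp add: sum_distrib_left)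
  also have "\<dots> = (if p \<in> S then (\<Sum>a\<in>S. \<Sum>b\<in>S'. D () (a, b) * B (b, p) () * mid S a q) else 0)"
    using fin by (auto simp: sum_mid_left Y mult.assoc intro!: sum.cong)
  also have "\<dots> = (if p \<in> S then (\<Sum>b\<in>S'. \<Sum>a\<in>S. D () (a, b) * B (b, p) () * mid S a q) else 0)"
    by (simp add: sum.swap[of _ S])
  also have "\<dots> = (if p \<in> S \<and> q \<in> S then (\<Sum>b\<in>S'. D () (q, b) * B (b, p) ()) else 0)"
    using fin by (simp add: sum_mid_right)
  finally have X: "mcomp ((S \<times> S') \<times> S) (kron D (mid S)) Y ((), p) q
      = (if p \<in> S \<and> q \<in> S then (\<Sum>b\<in>S'. D () (q, b) * B (b, p) ()) else 0)" .
  show ?thesis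
    unfolding Y_def[symmetric] unfolding mcomp_def sum_unit_prod lunit_def
    using fin X by (simp add: sum_mid_left mcomp_def)
qed

lemma Iset_iff: "g \<in> Iset \<longleftrightarrow> snd g > 0 \<and> fst g \<noteq> 0"
  by (cases g) (simp add: Iset_def)

lemma ginv_in_Iset: "g \<in> Iset \<Longrightarrow> ginv g \<in> Iset"
  by (simp add: Iset_iff ginv_def)

lemma ginv_ginv: "g \<in> Iset \<Longrightarrow> ginv (ginv g) = g"
  by (cases g) (simp add: Iset_iff ginv_def)

lemma ginv_involution: "\<forall>i\<in>Iset. ginv i \<in> Iset \<and> ginv (ginv i) = i"
  using ginv_in_Iset ginv_ginv by auto

(* Inversion swaps I_+ and I_-, hence eps_{g^*} = eps_g^{-1}. *)
lemma epsg_ginv: assumes "g \<in> Iset" shows "epsg eps (ginv g) = inverse (epsg eps g)"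
proof -
  have y: "snd g > 0" and x: "fst g \<noteq> 0" using assms by (auto simp: Iset_iff)
  show ?thesis
  proof (cases "fst g > 0")
    case True
    have "0 < fst g / snd g" using True y by simp
    moreover have "- fst g / snd g = - (fst g / snd g)" by simp
    ultimately have "\<not> (0 < - fst g / snd g)" by linarith
    then show ?thesis using True by (simp add: epsg_def ginv_def)
  next
    case False
    hence "fst g < 0" using x by simp
    hence "0 < - fst g / snd g" using y by (simp add: divide_neg_pos)
    then show ?thesis using False by (simp add: epsg_def ginv_def)
  qed
qed

locale primitive_root =
  fixes N :: nat and w eps :: complex
  assumes N1: "N \<ge> 1" and wN: "w ^ N = 1" and wprim: "\<forall>k. 0 < k \<and> k < N \<longrightarrow> w ^ k \<noteq> 1"
    and epsN: "eps ^ N = -1"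
begin

abbreviation "V \<equiv> Vmod N w eps"
abbreviation "u \<equiv> ug N eps"
abbreviation "v \<equiv> vg N eps"
abbreviation "TV f g \<equiv> tensor (V f) (V g)"

lemma Npos: "0 < N" using N1 by simp

lemma w_nz: "w \<noteq> 0" using wN N1 by (metis power_0_left zero_neq_one not_one_le_zero)

lemma w_mod: "w ^ (n mod N) = w ^ n"
proof -
  have "w ^ n = w ^ (N * (n div N) + n mod N)" by simp
  also have "\<dots> = (w ^ N) ^ (n div N) * w ^ (n mod N)" by (simp only: power_add power_mult)
  finally show ?thesis using wN by simp
qed

lemma w_inj: assumes "a < N" "b < N" "w ^ a = w ^ b" shows "a = b"
proof (rule ccontr)
  assume ne: "a \<noteq> b"
  { fix a b :: nat assume ab: "a < b" "b < N" "w ^ a = w ^ b"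
    have "w ^ a * w ^ (b - a) = w ^ (a + (b - a))" by (simp only: power_add)
    hence "w ^ b = w ^ a * w ^ (b - a)" using ab by simp
    hence "w ^ (b - a) = 1" using ab w_nz by simp
    moreover have "0 < b - a" "b - a < N" using ab by auto
    ultimately have False using wprim by blast }
  then show False using ne assms by (metis linorder_neqE_nat)
qed

lemma w_eq_iff: "w ^ a = w ^ b \<longleftrightarrow> a mod N = b mod N"
  using w_inj[of "a mod N" "b mod N"] w_mod[of a] w_mod[of b] Npos by (auto simp del: w_mod)

lemma eps_nz: "eps \<noteq> 0" using epsN Npos by (metis neg_equal_0_iff_equal power_0_left zero_neq_one less_not_refl)

lemma w_half: "N = 2 * k \<Longrightarrow> w ^ k = -1"
proof -
  assume N: "N = 2 * k"
  have k: "0 < k" "k < N" using N Npos by auto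
  have "(w ^ k) ^ 2 = 1" using wN N by (simp add: power_mult[symmetric] mult.commute)
  hence "w ^ k = 1 \<or> w ^ k = -1" by (simp add: power2_eq_1_iff)
  then show ?thesis using wprim k by auto
qed

lemma root_power_sum:
  assumes "i < N"
  shows "(\<Sum>k<N. (w ^ p / w ^ i) ^ k) = (if p mod N = i then of_nat N else 0)"
proof (cases "p mod N = i")
  case True
  hence "w ^ p / w ^ i = 1" using w_nz by (metis w_mod divide_self power_not_zero)
  then show ?thesis using True w_nz by simp
next
  case False
  define z where "z = w ^ p / w ^ i"
  have ne: "z \<noteq> 1" using False w_nz w_eq_iff assms by (auto simp: z_def divide_eq_1_iff)
  have "z ^ N = 1"
    using wN w_nz by (simp add: z_def power_divide power_mult[symmetric] mult.commute[of _ N]) (simp add: power_mult)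
  then have "(\<Sum>k<N. z ^ k) = 0" using ne by (simp add: sum_gp_strict)
  then show ?thesis using False by (simp add: z_def)
qed

lemma qbinom_root: "0 < m \<Longrightarrow> m < N \<Longrightarrow> qbinom w N m = 0"
proof -
  assume m: "0 < m" "m < N"
  have "qbinom w N m * (\<Prod>k\<in>{1..m}. (1 - w ^ k)) = 0"
    unfolding qbinom_prod using m wN by (intro prod_zero) (auto intro!: bexI[of _ 0])
  moreover have "(\<Prod>k\<in>{1..m}. (1 - w ^ k)) \<noteq> 0"
    using m wprim by (subst prod_zero_iff) auto
  ultimately show ?thesis by simp
qed

lemma nrt_pow: "(nrt N eps x) ^ N = complex_of_real x"
proof -
  consider "x > 0" | "x < 0" | "x = 0" by linarith
  then show ?thesis
  proof cases
    case 1 then show ?thesis using Npos by (simp add: nrt_def of_real_power[symmetric])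
  next
    case 2
    have "(eps * complex_of_real (root N (- x))) ^ N = eps ^ N * complex_of_real (root N (-x) ^ N)"
      by (simp add: power_mult_distrib of_real_power)
    also have "root N (-x) ^ N = - x" using 2 Npos by simp
    finally show ?thesis using 2 epsN by (simp add: nrt_def)
  next
    case 3 then show ?thesis using Npos by (simp add: nrt_def)
  qed
qed

lemma nrt_nz: "x \<noteq> 0 \<Longrightarrow> nrt N eps x \<noteq> 0"
  using nrt_pow[of x] Npos by (metis of_real_eq_0_iff power_0_left less_not_refl)

definition "cpred i = (i + N - 1) mod N"
definition "csucc i = (i + 1) mod N"

lemma cpred_lt: "cpred i < N" using Npos by (simp add: cpred_def)
lemma csucc_lt: "csucc i < N" using Npos by (simp add: csucc_def)

lemma cpred_eq: "i < N \<Longrightarrow> cpred i = (if i = 0 then N - 1 else i - 1)"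
proof (cases i)
  case 0 then show ?thesis using Npos by (simp add: cpred_def)
next
  case (Suc k) assume "i < N"
  then have "i + N - 1 = k + N" using Suc by simp
  then show ?thesis using Suc \<open>i < N\<close> by (simp add: cpred_def)
qed
lemma csucc_eq: "i < N \<Longrightarrow> csucc i = (if i = N - 1 then 0 else i + 1)"
  using Npos by (auto simp: csucc_def)
lemma csucc_cpred: "i < N \<Longrightarrow> csucc (cpred i) = i"
  using Npos by (auto simp: cpred_eq csucc_eq)
lemma cpred_csucc: "i < N \<Longrightarrow> cpred (csucc i) = i"
  using Npos by (auto simp: cpred_eq csucc_eq)

lemma csucc_iff: "p < N \<Longrightarrow> q < N \<Longrightarrow> (p = (q + 1) mod N) \<longleftrightarrow> (q = cpred p)"
  using csucc_cpred cpred_csucc by (metis csucc_def)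

lemma cpred_iff_csucc: "r < N \<Longrightarrow> q < N \<Longrightarrow> (q = cpred r) \<longleftrightarrow> (r = csucc q)"
  using csucc_cpred cpred_csucc by metis

lemma cpred_eq_csucc: "x < N \<Longrightarrow> k < N \<Longrightarrow> (cpred x = k) \<longleftrightarrow> (x = csucc k)"
  using cpred_iff_csucc[of x k] by auto

lemma csucc_iter: "p < N \<Longrightarrow> (csucc ^^ n) p = (p + n) mod N"
  by (induction n) (auto simp: csucc_def mod_Suc_eq)

lemma w_cpred: "p < N \<Longrightarrow> w * w ^ (cpred p) = w ^ p"
proof -
  assume p: "p < N"
  have "w * w ^ (cpred p) = w ^ (cpred p + 1)" by simp
  also have "\<dots> = w ^ ((cpred p + 1) mod N)" by (rule w_mod[symmetric])
  also have "\<dots> = w ^ p" using csucc_cpred[OF p] by (simp add: csucc_def)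
  finally show ?thesis .
qed

lemma cpred_mod_add: "(a + cpred j) mod N = cpred ((a + j) mod N)"
proof -
  have "(a + cpred j) mod N = (a + (j + (N - 1))) mod N" unfolding cpred_def using Npos by (simp add: mod_add_right_eq)
  also have "\<dots> = ((a + j) mod N + (N - 1)) mod N" by (simp add: mod_add_left_eq add.assoc)
  also have "\<dots> = cpred ((a + j) mod N)" unfolding cpred_def using Npos by simp
  finally show ?thesis .
qed

lemma cpred_mod_add': "(cpred i + j) mod N = cpred ((i + j) mod N)"
  using cpred_mod_add[of j i] by (simp add: add.commute)

lemma cpred_Suc_mod: "cpred (Suc x mod N) = x mod N"
proof -
  have "Suc x mod N = csucc (x mod N)" by (simp add: csucc_def mod_Suc_eq)
  then show ?thesis using cpred_csucc[of "x mod N"] Npos by simp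
qed

lemma csucc_mod_add: "(a + csucc j) mod N = csucc ((a + j) mod N)"
  by (simp add: csucc_def mod_add_right_eq mod_Suc_eq)
lemma csucc_mod_add': "(csucc i + j) mod N = csucc ((i + j) mod N)"
  using csucc_mod_add[of j i] by (simp add: add.commute)

lemma cpred_eq_iff: "i < N \<Longrightarrow> (cpred i = x mod N) \<longleftrightarrow> (i = Suc x mod N)"
proof -
  assume i: "i < N"
  have "x mod N < N" using Npos by simp
  hence "(x mod N = cpred i) \<longleftrightarrow> (i = csucc (x mod N))" using cpred_iff_csucc[OF i] by blast
  moreover have "csucc (x mod N) = Suc x mod N" by (simp add: csucc_def mod_Suc_eq)
  ultimately show ?thesis by auto
qed

lemma w_pow_neg: "i < N \<Longrightarrow> w ^ i * w ^ ((N - i) mod N) = 1"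
proof -
  assume i: "i < N"
  have "(i + (N - i) mod N) mod N = (i + (N - i)) mod N" by (simp add: mod_add_right_eq)
  also have "\<dots> = 0" using i by simp
  finally have "w ^ (i + (N - i) mod N) = w ^ 0" using w_mod by (metis)
  then show ?thesis by (simp add: power_add)
qed

lemma N_cpred: "i < N \<Longrightarrow> (N - cpred i) mod N = csucc ((N - i) mod N)"
  using Npos by (cases i) (auto simp: cpred_eq csucc_def mod_Suc_eq Suc_diff_Suc)

definition compl_idx :: "nat \<Rightarrow> nat \<Rightarrow> nat" where "compl_idx s i = (s + (N - i)) mod N"

lemma compl_idx_lt: "compl_idx s i < N" using Npos by (simp add: compl_idx_def)

lemma compl_idx_sum: "i < N \<Longrightarrow> (i + compl_idx s i) mod N = s mod N"
proof -
  assume i: "i < N"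
  have "(i + compl_idx s i) mod N = (i + (s + (N - i))) mod N" by (simp add: compl_idx_def mod_add_right_eq)
  also have "i + (s + (N - i)) = s + N" using i by simp
  finally show ?thesis by simp
qed

lemma compl_idx_uniq: "i < N \<Longrightarrow> j < N \<Longrightarrow> (i + j) mod N = s mod N \<Longrightarrow> j = compl_idx s i"
proof -
  assume i: "i < N" and j: "j < N" and e: "(i + j) mod N = s mod N"
  have "compl_idx s i = (s mod N + (N - i)) mod N" by (simp add: compl_idx_def mod_add_left_eq)
  also have "\<dots> = ((i + j) mod N + (N - i)) mod N" using e by simp
  also have "\<dots> = (i + j + (N - i)) mod N" by (simp add: mod_add_left_eq)
  also have "i + j + (N - i) = j + N" using i by simp
  finally show ?thesis using j by simp
qed

lemma compl_idx_mod: "s mod N = s' mod N \<Longrightarrow> compl_idx s i = compl_idx s' i"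
  by (simp add: compl_idx_def mod_add_left_eq[symmetric, of s] mod_add_left_eq[symmetric, of s'])

lemma car_V[simp]: "car (V g) = {..<N}" by (simp add: Vmod_def)
lemma actA_V[simp]: "actA (V g) p q = (if p < N \<and> q = p then u g * w ^ p else 0)" by (simp add: Vmod_def)
lemma actB_V[simp]: "actB (V g) p q = (if p < N \<and> q < N \<and> q = cpred p then v g else 0)"
  using csucc_iff by (auto simp: Vmod_def)

lemma mcomp_A_left: "p < N \<Longrightarrow> mcomp {..<N} (actA (V g)) F p q = u g * w ^ p * F p q"
  unfolding mcomp_def by (subst sum_single[where a=p]) auto
lemma mcomp_A_right: "q < N \<Longrightarrow> mcomp {..<N} F (actA (V g)) p q = F p q * (u g * w ^ q)"
  unfolding mcomp_def by (subst sum_single[where a=q]) auto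
lemma mcomp_B_left: "p < N \<Longrightarrow> mcomp {..<N} (actB (V g)) F p q = v g * F (cpred p) q"
  unfolding mcomp_def by (subst sum_single[where a="cpred p"]) (auto simp: cpred_lt)
lemma mcomp_B_right: "q < N \<Longrightarrow> mcomp {..<N} F (actB (V g)) p q = F p (csucc q) * v g"
  unfolding mcomp_def by (subst sum_single[where a="csucc q"]) (auto simp: csucc_lt cpred_iff_csucc)

lemma car_TV[simp]: "car (TV f g) = {..<N} \<times> {..<N}" by (simp add: tensor_def)
lemma actA_TV: "actA (TV f g) = kron (actA (V f)) (actA (V g))" by (simp add: tensor_def)
lemma actB_TV: "actB (TV f g) = (\<lambda>P Q. kron (actA (V f)) (actB (V g)) P Q + kron (actB (V f)) (mid {..<N}) P Q)"
  by (simp add: tensor_def)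

lemma mcomp_TA_left: "i < N \<Longrightarrow> j < N \<Longrightarrow>
   mcomp ({..<N} \<times> {..<N}) (actA (TV f g)) F (i, j) q = u f * w ^ i * (u g * w ^ j) * F (i, j) q"
  unfolding mcomp_def actA_TV by (subst sum_single[where a="(i,j)"]) (auto simp: kron_def split: if_splits)
lemma mcomp_TA_right: "i < N \<Longrightarrow> j < N \<Longrightarrow>
   mcomp ({..<N} \<times> {..<N}) F (actA (TV f g)) p (i, j) = F p (i, j) * (u f * w ^ i * (u g * w ^ j))"
  unfolding mcomp_def actA_TV by (subst sum_single[where a="(i,j)"]) (auto simp: kron_def split: if_splits)
lemma mcomp_TB_left:
  assumes "i < N" "j < N"
  shows "mcomp ({..<N} \<times> {..<N}) (actB (TV f g)) F (i, j) q
       = u f * w ^ i * v g * F (i, cpred j) q + v f * F (cpred i, j) q"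
proof -
  have "mcomp ({..<N} \<times> {..<N}) (kron (actA (V f)) (actB (V g))) F (i, j) q = u f * w ^ i * v g * F (i, cpred j) q"
    unfolding mcomp_def using assms
    by (subst sum_single[where a="(i, cpred j)"]) (auto simp: kron_def cpred_lt split: if_splits)
  moreover have "mcomp ({..<N} \<times> {..<N}) (kron (actB (V f)) (mid {..<N})) F (i, j) q = v f * F (cpred i, j) q"
    unfolding mcomp_def using assms
    by (subst sum_single[where a="(cpred i, j)"]) (auto simp: kron_def cpred_lt mid_def split: if_splits)
  ultimately show ?thesis by (simp add: actB_TV mcomp_add_left)
qed

lemma mcomp_TB_right:
  assumes "i < N" "j < N"
  shows "mcomp ({..<N} \<times> {..<N}) F (actB (TV f g)) p (i, j)
       = F p (i, csucc j) * (u f * w ^ i * v g) + F p (csucc i, j) * v f"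
proof -
  have "mcomp ({..<N} \<times> {..<N}) F (kron (actA (V f)) (actB (V g))) p (i, j) = F p (i, csucc j) * (u f * w ^ i * v g)"
    unfolding mcomp_def using assms
    by (subst sum_single[where a="(i, csucc j)"]) (auto simp: kron_def csucc_lt cpred_iff_csucc split: if_splits)
  moreover have "mcomp ({..<N} \<times> {..<N}) F (kron (actB (V f)) (mid {..<N})) p (i, j) = F p (csucc i, j) * v f"
    unfolding mcomp_def using assms
    by (subst sum_single[where a="(csucc i, j)"]) (auto simp: kron_def csucc_lt mid_def cpred_iff_csucc split: if_splits)
  ultimately show ?thesis by (simp add: actB_TV mcomp_add_right)
qed

lemma car_unit[simp]: "car unitrep = UNIV" and actA_unit[simp]: "actA unitrep = (\<lambda>_ _. 1)"
  and actB_unit[simp]: "actB unitrep = (\<lambda>_ _. 0)"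
  by (simp_all add: unitrep_def)

lemma u_nz: "snd g > 0 \<Longrightarrow> u g \<noteq> 0" by (simp add: ug_def nrt_nz)
lemma v_nz: "fst g \<noteq> 0 \<Longrightarrow> v g \<noteq> 0" by (simp add: vg_def nrt_nz)
lemma u_pow: "u g ^ N = of_real (snd g)" by (simp add: ug_def nrt_pow)
lemma v_pow: "v g ^ N = of_real (fst g)" by (simp add: vg_def nrt_pow)

lemma u_gmul: "snd f > 0 \<Longrightarrow> snd g > 0 \<Longrightarrow> u (gmul f g) = u f * u g"
  by (simp add: ug_def nrt_def gmul_def real_root_mult)

lemma vN_gmul: "v (gmul f g) ^ N = (u f * v g) ^ N + v f ^ N"
  by (simp add: v_pow u_pow power_mult_distrib gmul_def)

lemma epsg_N: "epsg eps h ^ N = -1"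
  using epsN by (simp add: epsg_def power_inverse)

lemma epsg_nz: "epsg eps h \<noteq> 0" using eps_nz by (simp add: epsg_def)

lemma u_ginv: "g \<in> Iset \<Longrightarrow> u g * u (ginv g) = 1"
  using Npos by (simp add: Iset_iff ginv_def ug_def nrt_def real_root_divide flip: of_real_mult)

(* The relation u_g v_{g^*} = eps_g v_g behind the choice of Phi. *)
lemma uv_ginv: assumes "g \<in> Iset" shows "u g * v (ginv g) = epsg eps g * v g"
proof -
  have y: "snd g > 0" and x: "fst g \<noteq> 0" using assms by (auto simp: Iset_iff)
  show ?thesis
  proof (cases "fst g > 0")
    case True
    have "- fst g / snd g < 0" using True y by (simp add: divide_pos_pos)
    hence "v (ginv g) = eps * complex_of_real (root N (fst g / snd g))"
      by (simp add: vg_def ginv_def nrt_def)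
    moreover have "root N (fst g / snd g) * root N (snd g) = root N (fst g)"
      using y by (simp add: real_root_divide real_root_eq_0_iff[OF Npos])
    ultimately show ?thesis using True y Npos
      by (simp add: real_root_eq_0_iff[OF Npos] ug_def vg_def nrt_def epsg_def algebra_simps flip: of_real_mult)
  next
    case False
    hence neg: "fst g < 0" using x by simp
    have "- fst g / snd g > 0" using neg y by (simp add: divide_neg_pos)
    hence "v (ginv g) = complex_of_real (root N (- fst g / snd g))"
      by (simp add: vg_def ginv_def nrt_def)
    moreover have "root N (snd g) * root N (- fst g / snd g) = root N (- fst g)"
      using y by (simp add: real_root_minus real_root_divide real_root_eq_0_iff[OF Npos])
    ultimately show ?thesis using neg y eps_nz Npos
      by (simp add: ug_def vg_def nrt_def epsg_def flip: of_real_mult)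
  qed
qed

lemma module_V: assumes "snd g > 0" shows "is_module w (V g)"
proof -
  have un: "u g \<noteq> 0" using u_nz assms by simp
  define A' where "A' = (\<lambda>p q. if p < N \<and> q = p then inverse (u g * w ^ p) else (0::complex))"
  have 1: "\<forall>p\<in>car (V g). \<forall>q\<in>car (V g).
            mcomp (car (V g)) (actA (V g)) A' p q = mid (car (V g)) p q \<and> mcomp (car (V g)) A' (actA (V g)) p q = mid (car (V g)) p q"
    using un w_nz by (auto simp: mcomp_A_left mcomp_A_right A'_def mid_def field_simps)
  have 2: "\<forall>p\<in>car (V g). \<forall>q\<in>car (V g). mcomp (car (V g)) (actA (V g)) (actB (V g)) p q = w * mcomp (car (V g)) (actB (V g)) (actA (V g)) p q"
  proof (intro ballI)
    fix p q assume "p \<in> car (V g)" "q \<in> car (V g)"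
    hence pq: "p < N" "q < N" by auto
    show "mcomp (car (V g)) (actA (V g)) (actB (V g)) p q = w * mcomp (car (V g)) (actB (V g)) (actA (V g)) p q"
      unfolding car_V mcomp_A_left[OF pq(1)] mcomp_A_right[OF pq(2)]
      using pq w_cpred[OF pq(1)] by (auto simp: algebra_simps)
  qed
  show ?thesis unfolding is_module_def using 1 2 by (auto simp: Vmod_def)
qed

lemma mapp_actA: "mapp {..<N} (actA (V g)) x = (\<lambda>p. if p < N then u g * w ^ p * x p else 0)"
proof (rule ext)
  fix p show "mapp {..<N} (actA (V g)) x p = (if p < N then u g * w ^ p * x p else 0)"
  proof (cases "p < N")
    case True then show ?thesis unfolding mapp_def by (subst sum_single[where a=p]) auto
  qed (simp add: mapp_def)
qed

lemma mapp_actB: "mapp {..<N} (actB (V g)) x = (\<lambda>p. if p < N then v g * x (cpred p) else 0)"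
proof (rule ext)
  fix p show "mapp {..<N} (actB (V g)) x p = (if p < N then v g * x (cpred p) else 0)"
  proof (cases "p < N")
    case True then show ?thesis unfolding mapp_def by (subst sum_single[where a="cpred p"]) (auto simp: cpred_lt)
  qed (simp add: mapp_def)
qed

(* Averaging the powers a^k against the eigenvalue of w_i projects onto the line of w_i:
   an invariant subspace containing x with x_i <> 0 contains w_i. *)
lemma invariant_unit_vec:
  assumes g: "g \<in> Iset" and inv: "invariant (V g) U" and xU: "x \<in> U" and xi: "x i \<noteq> 0"
  shows "unit_vec i \<in> U"
proof -
  have un: "u g \<noteq> 0" using g u_nz by (simp add: Iset_iff)
  have Uv: "U \<subseteq> vecs (V g)" using inv by (simp add: invariant_def)
  have scal: "(\<lambda>p. c * y p) \<in> U" if "y \<in> U" for c y using inv that by (simp add: invariant_def)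
  have xv: "\<And>p. p \<ge> N \<Longrightarrow> x p = 0" using xU Uv by (auto simp: vecs_def)
  have iN: "i < N" using xv xi by (meson not_le)
  have pw: "(\<lambda>p. (u g * w ^ p) ^ k * x p) \<in> U" for k
  proof (induction k)
    case 0 then show ?case using xU by simp
  next
    case (Suc k)
    have "(\<lambda>p. (u g * w ^ p) ^ Suc k * x p)
        = (\<lambda>p. if p < N then u g * w ^ p * ((u g * w ^ p) ^ k * x p) else 0)"
      using xv by (auto simp: fun_eq_iff)
    then show ?case using inv Suc by (simp add: invariant_def mapp_actA)
  qed
  have avg: "(\<Sum>k<N. inverse (u g * w ^ i) ^ k * ((u g * w ^ p) ^ k * x p)) = of_nat N * x i * unit_vec i p" for p
  proof -
    have summand: "inverse (u g * w ^ i) ^ k * ((u g * w ^ p) ^ k * x p) = (w ^ p / w ^ i) ^ k * x p" for k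
      using un w_nz by (simp add: power_mult_distrib field_simps)
    have "(\<Sum>k<N. inverse (u g * w ^ i) ^ k * ((u g * w ^ p) ^ k * x p)) = (\<Sum>k<N. (w ^ p / w ^ i) ^ k) * x p"
      by (simp only: summand sum_distrib_right)
    also have "\<dots> = of_nat N * x i * unit_vec i p"
      using root_power_sum[OF iN, of p] xv iN by (cases "p < N") (auto simp: unit_vec_def)
    finally show ?thesis .
  qed
  have "(\<lambda>p. \<Sum>k\<in>{..<N}. inverse (u g * w ^ i) ^ k * ((u g * w ^ p) ^ k * x p)) \<in> U"
    by (rule invariant_sum[OF inv]) (auto intro: scal pw)
  then have "(\<lambda>p. of_nat N * x i * unit_vec i p) \<in> U" by (simp only: avg)
  from scal[OF this, of "inverse (of_nat N * x i)"]
  moreover have "(\<lambda>p. inverse (of_nat N * x i) * (of_nat N * x i * unit_vec i p)) = unit_vec i"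
    using xi Npos by (auto simp: unit_vec_def fun_eq_iff field_simps)
  ultimately show ?thesis by simp
qed

(* b maps the line of w_j onto the line of w_{j+1}. *)
lemma invariant_unit_vec_csucc:
  assumes g: "g \<in> Iset" and inv: "invariant (V g) U" and e: "unit_vec j \<in> U" and j: "j < N"
  shows "unit_vec (csucc j) \<in> U"
proof -
  have vn: "v g \<noteq> 0" using g v_nz by (simp add: Iset_iff)
  have "mapp {..<N} (actB (V g)) (unit_vec j) = (\<lambda>p. v g * unit_vec (csucc j) p)"
    using j cpred_iff_csucc[of _ j] csucc_lt[of j] cpred_csucc[OF j]
    by (auto simp: mapp_actB unit_vec_def fun_eq_iff)
  then have "(\<lambda>p. v g * unit_vec (csucc j) p) \<in> U" using inv e by (metis invariant_def car_V)
  then have "(\<lambda>p. inverse (v g) * (v g * unit_vec (csucc j) p)) \<in> U" using inv by (simp add: invariant_def)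
  moreover have "(\<lambda>p. inverse (v g) * (v g * unit_vec (csucc j) p)) = unit_vec (csucc j)"
    using vn by (simp add: fun_eq_iff)
  ultimately show ?thesis by simp
qed

(* V_g is simple for g in I: a nonzero invariant subspace contains some w_i, hence all w_j. *)
lemma simple_V:
  assumes g: "g \<in> Iset" shows "simple (V g)"
proof -
  have "U = vecs (V g)" if inv: "invariant (V g) U" and ne: "U \<noteq> {\<lambda>_. 0}" for U
  proof
    show Uv: "U \<subseteq> vecs (V g)" using inv by (simp add: invariant_def)
    obtain x i where xU: "x \<in> U" and xi: "x i \<noteq> 0"
      using ne inv by (auto simp: invariant_def fun_eq_iff)
    have iN: "i < N" using xU xi Uv by (auto simp: vecs_def not_le[symmetric])
    have all: "unit_vec ((i + m) mod N) \<in> U" for m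
    proof (induction m)
      case 0 then show ?case using invariant_unit_vec[OF g inv xU xi] iN by simp
    next
      case (Suc m)
      from invariant_unit_vec_csucc[OF g inv Suc] Npos show ?case by (simp add: csucc_def mod_Suc_eq)
    qed
    have ej: "unit_vec j \<in> U" if "j < N" for j
      using all[of "j + N - i"] that iN by simp
    show "vecs (V g) \<subseteq> U"
    proof
      fix y assume "y \<in> vecs (V g)"
      hence yv: "\<And>p. p \<ge> N \<Longrightarrow> y p = 0" by (auto simp: vecs_def)
      have "(\<lambda>p. \<Sum>j\<in>{..<N}. y j * unit_vec j p) \<in> U"
        by (rule invariant_sum[OF inv]) (use inv ej in \<open>auto simp: invariant_def\<close>)
      moreover have "(\<lambda>p. \<Sum>j\<in>{..<N}. y j * unit_vec j p) = y"
      proof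
        fix p show "(\<Sum>j\<in>{..<N}. y j * unit_vec j p) = y p"
          using yv by (cases "p < N") (auto simp: unit_vec_def if_distrib[of "\<lambda>z. _ * z"] cong: if_cong)
      qed
      ultimately show "y \<in> U" by simp
    qed
  qed
  then show ?thesis unfolding simple_def using Npos by auto
qed

lemma Hom_V_relations: assumes "\<phi> \<in> Hom (V g) (V h)" "p < N" "q < N"
  shows "u h * w ^ p * \<phi> p q = \<phi> p q * (u g * w ^ q)" "v h * \<phi> (cpred p) q = \<phi> p (csucc q) * v g"
  using assms mcomp_A_left[of p h \<phi> q] mcomp_A_right[of q \<phi> g p] mcomp_B_left[of p h \<phi> q] mcomp_B_right[of q \<phi> g p]
  unfolding Hom_def by auto

(* A nonzero morphism V_g -> V_h forces g = h: the a-relation gives u_h^N = u_g^N, and going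
   once around the cycle with the b-relation gives v_h^N = v_g^N. *)
lemma Hom_V_nonzero:
  assumes "\<phi> \<in> Hom (V g) (V h)" "\<phi> p q \<noteq> 0"
  shows "g = h"
proof -
  have pq: "p < N" "q < N" using assms unfolding Hom_def by auto
  have "u h * w ^ p = u g * w ^ q" using Hom_V_relations(1)[OF assms(1) pq] assms(2)
    by (simp add: algebra_simps)
  hence "(u h * w ^ p) ^ N = (u g * w ^ q) ^ N" by simp
  hence "u h ^ N = u g ^ N" using wN by (simp add: power_mult_distrib power_mult[symmetric] mult.commute[of _ N] power_mult)
  hence y: "snd g = snd h" by (simp add: u_pow)
  have orbit: "v h ^ n * \<phi> p q = v g ^ n * \<phi> ((csucc ^^ n) p) ((csucc ^^ n) q)" for n
  proof (induction n)
    case 0 then show ?case by simp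
  next
    case (Suc n)
    have l: "(csucc ^^ n) p < N" "(csucc ^^ n) q < N" using pq by (auto simp: csucc_iter)
    have "v h * \<phi> ((csucc ^^ n) p) ((csucc ^^ n) q) = \<phi> ((csucc ^^ Suc n) p) ((csucc ^^ Suc n) q) * v g"
      using Hom_V_relations(2)[OF assms(1) csucc_lt[of "(csucc ^^ n) p"] l(2)] cpred_csucc[OF l(1)] by simp
    then show ?case using Suc by (simp add: algebra_simps) (metis mult.assoc mult.left_commute)
  qed
  have "v h ^ N * \<phi> p q = v g ^ N * \<phi> p q" using orbit[of N] pq by (simp add: csucc_iter)
  hence "v h ^ N = v g ^ N" using assms(2) by simp
  hence "fst g = fst h" by (simp add: v_pow)
  with y show ?thesis by (simp add: prod_eq_iff)
qed

(* The operator a A + b B on C^N, where A = diag(varpi^i) and B shifts e_i to e_{i+1}.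
   Since BA = varpi AB, its N-th power is (a^N + b^N) Id (q-binomial theorem).  With
   a = u_f v_g and b = v_f it is the action of b on a fixed weight space of V_f (x) V_g. *)
definition ab_op :: "complex \<Rightarrow> complex \<Rightarrow> (nat \<Rightarrow> complex) \<Rightarrow> nat \<Rightarrow> complex" where
  "ab_op a b c = (\<lambda>i. if i < N then a * w ^ i * c i + b * c (cpred i) else 0)"

(* Coefficient of A^(n-m) B^m applied to e_r: a^(n-m) b^m varpi^((n-m) r) [n choose m]_varpi. *)
definition ab_coeff :: "complex \<Rightarrow> complex \<Rightarrow> nat \<Rightarrow> nat \<Rightarrow> nat \<Rightarrow> complex" where
  "ab_coeff a b r n m = a ^ (n - m) * b ^ m * w ^ ((n - m) * r) * qbinom w n m"

lemma ab_coeff_gt: "n < m \<Longrightarrow> ab_coeff a b r n m = 0" by (simp add: ab_coeff_def qbinom_above)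

lemma ab_coeff_Suc: "ab_coeff a b r (Suc n) m = a * w ^ (r + m) * ab_coeff a b r n m + (if m = 0 then 0 else b * ab_coeff a b r n (m - 1))"
proof (cases m)
  case 0
  have "w ^ (Suc n * r) = w ^ r * w ^ (n * r)" by (simp add: power_add)
  then show ?thesis using 0 by (simp add: ab_coeff_def mult.assoc mult.left_commute)
next
  case (Suc m')
  show ?thesis
  proof (cases "m' < n")
    case True
    define d where "d = n - Suc m'"
    have d: "n = Suc m' + d" using True by (simp add: d_def)
    have e1: "Suc n - Suc m' = Suc d" "n - Suc m' = d" "n - m' = Suc d" using d by auto
    have p1: "w ^ (Suc d * r) = w ^ r * w ^ (d * r)" by (simp add: power_add)
    have p3: "w ^ (r + Suc m') = w ^ r * (w * w ^ m')" by (simp add: power_add)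
    have L: "ab_coeff a b r (Suc n) (Suc m') = (a * a ^ d) * (b * b ^ m') * (w ^ r * w ^ (d * r)) * (qbinom w n m' + (w * w ^ m') * qbinom w n (Suc m'))"
      unfolding ab_coeff_def e1 p1 by simp
    have R1: "ab_coeff a b r n (Suc m') = a ^ d * (b * b ^ m') * w ^ (d * r) * qbinom w n (Suc m')"
      unfolding ab_coeff_def e1 by simp
    have R2: "ab_coeff a b r n m' = (a * a ^ d) * b ^ m' * (w ^ r * w ^ (d * r)) * qbinom w n m'"
      unfolding ab_coeff_def e1 p1 by simp
    show ?thesis unfolding Suc L R1 p3 by (simp add: R2 algebra_simps)
  next
    case False
    hence "ab_coeff a b r n (Suc m') = 0" by (simp add: ab_coeff_gt)
    moreover have "ab_coeff a b r (Suc n) (Suc m') = b * ab_coeff a b r n m'"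
      using False by (cases "m' = n") (simp_all add: ab_coeff_def qbinom_above qbinom_diag)
    ultimately show ?thesis using Suc by simp
  qed
qed

(* The i-th coordinate of (a A + b B)^n e_r: the coefficients landing at index i. *)
definition ab_orbit :: "complex \<Rightarrow> complex \<Rightarrow> nat \<Rightarrow> nat \<Rightarrow> nat \<Rightarrow> complex" where
  "ab_orbit a b r n i = (\<Sum>m\<le>n. if i = (r + m) mod N then ab_coeff a b r n m else 0)"

lemma ab_orbit_Suc:
  assumes i: "i < N"
  shows "ab_orbit a b r (Suc n) i = a * w ^ i * ab_orbit a b r n i + b * ab_orbit a b r n (cpred i)"
proof -
  have diag: "(\<Sum>m\<le>Suc n. if i = (r + m) mod N then a * w ^ (r + m) * ab_coeff a b r n m else 0)
        = a * w ^ i * ab_orbit a b r n i"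
  proof -
    have "(\<Sum>m\<le>Suc n. if i = (r + m) mod N then a * w ^ (r + m) * ab_coeff a b r n m else 0)
        = (\<Sum>m\<le>n. if i = (r + m) mod N then a * w ^ (r + m) * ab_coeff a b r n m else 0)"
      by (simp add: ab_coeff_gt)
    also have "\<dots> = (\<Sum>m\<le>n. a * w ^ i * (if i = (r + m) mod N then ab_coeff a b r n m else 0))"
      by (rule sum.cong) (auto simp: w_mod)
    finally show ?thesis by (simp add: sum_distrib_left ab_orbit_def)
  qed
  have shift: "(\<Sum>m\<le>Suc n. if i = (r + m) mod N then (if m = 0 then 0 else b * ab_coeff a b r n (m - 1)) else 0)
        = b * ab_orbit a b r n (cpred i)"
  proof -
    have "(\<Sum>m\<le>Suc n. if i = (r + m) mod N then (if m = 0 then 0 else b * ab_coeff a b r n (m - 1)) else 0)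
        = (\<Sum>m\<le>n. if i = (r + Suc m) mod N then b * ab_coeff a b r n m else 0)"
      by (subst sum.atMost_Suc_shift) (simp cong: if_cong)
    also have "\<dots> = (\<Sum>m\<le>n. b * (if cpred i = (r + m) mod N then ab_coeff a b r n m else 0))"
      by (rule sum.cong) (auto simp: cpred_eq_iff[OF i])
    finally show ?thesis by (simp add: sum_distrib_left ab_orbit_def)
  qed
  have "ab_orbit a b r (Suc n) i
      = (\<Sum>m\<le>Suc n. (if i = (r + m) mod N then a * w ^ (r + m) * ab_coeff a b r n m else 0)
             + (if i = (r + m) mod N then (if m = 0 then 0 else b * ab_coeff a b r n (m - 1)) else 0))"
    unfolding ab_orbit_def by (rule sum.cong) (auto simp: ab_coeff_Suc)
  then show ?thesis by (simp only: sum.distrib diag shift)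
qed

lemma ab_op_unit_vec:
  assumes r: "r < N"
  shows "(ab_op a b ^^ n) (unit_vec r) = (\<lambda>i. if i < N then ab_orbit a b r n i else 0)"
proof (induction n)
  case 0 show ?case using r by (auto simp: unit_vec_def ab_coeff_def ab_orbit_def fun_eq_iff)
next
  case (Suc n) then show ?case using cpred_lt by (simp add: ab_op_def ab_orbit_Suc fun_eq_iff)
qed

(* The q-binomial theorem: (a A + b B)^N e_r = (a^N + b^N) e_r, as the middle
   Gaussian binomials [N choose m]_varpi vanish. *)
lemma ab_op_N_unit_vec:
  assumes r: "r < N"
  shows "(ab_op a b ^^ N) (unit_vec r) = (\<lambda>i. (a ^ N + b ^ N) * unit_vec r i)"
proof (rule ext)
  fix i
  show "(ab_op a b ^^ N) (unit_vec r) i = (a ^ N + b ^ N) * unit_vec r i"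
  proof (cases "i < N")
    case False then show ?thesis using r by (subst ab_op_unit_vec[OF r]) (simp add: unit_vec_def)
  next
    case i: True
    have "ab_orbit a b r N i = (\<Sum>m\<in>{0, N}. if i = (r + m) mod N then ab_coeff a b r N m else 0)"
      unfolding ab_orbit_def by (rule sum.mono_neutral_right) (auto simp: ab_coeff_def qbinom_root)
    also have "\<dots> = (if i = r then ab_coeff a b r N 0 + ab_coeff a b r N N else 0)"
      using r Npos by simp
    also have "ab_coeff a b r N 0 = a ^ N" by (simp add: ab_coeff_def power_mult wN)
    also have "ab_coeff a b r N N = b ^ N" by (simp add: ab_coeff_def qbinom_diag)
    finally show ?thesis using i by (subst ab_op_unit_vec[OF r]) (simp add: unit_vec_def)
  qed
qed

definition supported :: "(nat \<Rightarrow> complex) \<Rightarrow> bool" where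
  "supported c \<longleftrightarrow> (\<forall>i. i \<ge> N \<longrightarrow> c i = 0)"

lemma supported_unit_vec: "r < N \<Longrightarrow> supported (unit_vec r)"
  by (simp add: supported_def unit_vec_def)

lemma supported_ab_op: "supported (ab_op a b c)"
  by (simp add: supported_def ab_op_def)

lemma supported_ab_op_power: "supported c \<Longrightarrow> supported ((ab_op a b ^^ n) c)"
  by (cases n) (simp_all add: supported_ab_op)

lemma ab_op_scale: "ab_op a b (\<lambda>i. z * c i) = (\<lambda>i. z * ab_op a b c i)"
  by (simp add: ab_op_def fun_eq_iff algebra_simps)

lemma ab_op_lin: assumes "supported c"
  shows "(ab_op a b ^^ n) c = (\<lambda>i. \<Sum>r<N. c r * (ab_op a b ^^ n) (unit_vec r) i)"
proof (induction n)
  case 0 show ?case using assms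
    by (auto simp: fun_eq_iff unit_vec_def supported_def if_distrib[of "\<lambda>z. _ * z"] cong: if_cong)
next
  case (Suc n)
  define D where "D r = (ab_op a b ^^ n) (unit_vec r)" for r
  have e1: "(ab_op a b ^^ Suc n) c = ab_op a b (\<lambda>i. \<Sum>r<N. c r * D r i)" using Suc.IH by (simp add: D_def)
  have e2: "\<And>r. (ab_op a b ^^ Suc n) (unit_vec r) = ab_op a b (D r)" by (simp add: D_def)
  show ?case unfolding e1 e2 by (simp add: ab_op_def fun_eq_iff sum_distrib_left sum.distrib algebra_simps)
qed

lemma ab_op_N: assumes "supported c" shows "(ab_op a b ^^ N) c = (\<lambda>i. (a ^ N + b ^ N) * c i)"
proof -
  have "(ab_op a b ^^ N) c = (\<lambda>i. \<Sum>r<N. c r * ((a ^ N + b ^ N) * unit_vec r i))"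
    by (simp add: ab_op_lin[OF assms] ab_op_N_unit_vec)
  also have "\<dots> = (\<lambda>i. (a ^ N + b ^ N) * c i)"
    using assms by (auto simp: fun_eq_iff unit_vec_def supported_def if_distrib[of "\<lambda>z. _ * z"] cong: if_cong)
  finally show ?thesis .
qed

lemma ab_op_power_step: assumes "i < N"
  shows "(ab_op a b ^^ n) (ab_op a b (unit_vec i)) l = a * w ^ i * (ab_op a b ^^ n) (unit_vec i) l + b * (ab_op a b ^^ n) (unit_vec (csucc i)) l"
proof -
  let ?E = "\<lambda>x. (ab_op a b ^^ n) (unit_vec x) l"
  have "(ab_op a b ^^ n) (ab_op a b (unit_vec i)) l = (\<Sum>x<N. ab_op a b (unit_vec i) x * ?E x)"
    by (simp add: ab_op_lin[OF supported_ab_op])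
  also have "\<dots> = (\<Sum>x<N. (if x = i then a * w ^ i else 0) * ?E x + (if x = csucc i then b else 0) * ?E x)"
  proof (rule sum.cong)
    fix x assume "x \<in> {..<N}"
    hence x: "x < N" by simp
    show "ab_op a b (unit_vec i) x * ?E x = (if x = i then a * w ^ i else 0) * ?E x + (if x = csucc i then b else 0) * ?E x"
      using x assms cpred_eq_csucc[OF x assms] by (auto simp: ab_op_def unit_vec_def algebra_simps)
  qed simp
  also have "\<dots> = a * w ^ i * ?E i + b * ?E (csucc i)"
    using assms csucc_lt[of i] by (simp add: sum.distrib if_distrib[of "\<lambda>z. z * _"] cong: if_cong)
  finally show ?thesis .
qed

lemma Hom_tensor_relations: assumes "\<phi> \<in> Hom (V h) (TV f g)" "i < N" "j < N" "k < N"
  shows "u f * w ^ i * (u g * w ^ j) * \<phi> (i, j) k = \<phi> (i, j) k * (u h * w ^ k)"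
    "u f * w ^ i * v g * \<phi> (i, cpred j) k + v f * \<phi> (cpred i, j) k = \<phi> (i, j) (csucc k) * v h"
proof -
  have H: "\<forall>p\<in>car (TV f g). \<forall>q\<in>car (V h). mcomp (car (TV f g)) (actA (TV f g)) \<phi> p q = mcomp (car (V h)) \<phi> (actA (V h)) p q"
    "\<forall>p\<in>car (TV f g). \<forall>q\<in>car (V h). mcomp (car (TV f g)) (actB (TV f g)) \<phi> p q = mcomp (car (V h)) \<phi> (actB (V h)) p q"
    using assms(1) unfolding Hom_def by blast+
  show "u f * w ^ i * (u g * w ^ j) * \<phi> (i, j) k = \<phi> (i, j) k * (u h * w ^ k)"
    using H(1) assms(2-4) mcomp_TA_left[OF assms(2,3), of f g \<phi> k] mcomp_A_right[OF assms(4), of \<phi> h "(i,j)"] by auto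
  show "u f * w ^ i * v g * \<phi> (i, cpred j) k + v f * \<phi> (cpred i, j) k = \<phi> (i, j) (csucc k) * v h"
    using H(2) assms(2-4) mcomp_TB_left[OF assms(2,3), of f g \<phi> k] mcomp_B_right[OF assms(4), of \<phi> h "(i,j)"] by auto
qed

lemma Hom_tensor_support: "\<phi> \<in> Hom (V h) (TV f g) \<Longrightarrow> \<phi> P k \<noteq> 0 \<Longrightarrow> fst P < N \<and> snd P < N \<and> k < N"
  unfolding Hom_def by (cases P) auto

lemma Hom_tensorI:
  assumes supported: "\<And>P k. \<phi> P k \<noteq> 0 \<Longrightarrow> fst P < N \<and> snd P < N \<and> k < N"
    and A: "\<And>i j k. i < N \<Longrightarrow> j < N \<Longrightarrow> k < N \<Longrightarrow> u f * w ^ i * (u g * w ^ j) * \<phi> (i, j) k = \<phi> (i, j) k * (u h * w ^ k)"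
    and B: "\<And>i j k. i < N \<Longrightarrow> j < N \<Longrightarrow> k < N \<Longrightarrow> u f * w ^ i * v g * \<phi> (i, cpred j) k + v f * \<phi> (cpred i, j) k = \<phi> (i, j) (csucc k) * v h"
  shows "\<phi> \<in> Hom (V h) (TV f g)"
  unfolding Hom_def
proof (intro CollectI conjI ballI allI impI)
  fix p q assume "\<phi> p q \<noteq> 0" then show "p \<in> car (TV f g)" "q \<in> car (V h)" using supported[of p q] by (cases p; auto)+
next
  fix p q assume p: "p \<in> car (TV f g)" and q: "q \<in> car (V h)"
  obtain i j where ij: "p = (i, j)" "i < N" "j < N" using p by auto
  have qN: "q < N" using q by simp
  show "mcomp (car (TV f g)) (actA (TV f g)) \<phi> p q = mcomp (car (V h)) \<phi> (actA (V h)) p q"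
    unfolding car_TV car_V ij(1) mcomp_TA_left[OF ij(2,3)] mcomp_A_right[OF qN] by (rule A[OF ij(2,3) qN])
  show "mcomp (car (TV f g)) (actB (TV f g)) \<phi> p q = mcomp (car (V h)) \<phi> (actB (V h)) p q"
    unfolding car_TV car_V ij(1) mcomp_TB_left[OF ij(2,3)] mcomp_B_right[OF qN] by (rule B[OF ij(2,3) qN])
qed

lemma Hom_from_tensorI:
  assumes supported: "\<And>k P. \<psi> k P \<noteq> 0 \<Longrightarrow> fst P < N \<and> snd P < N \<and> k < N"
    and A: "\<And>i j k. i < N \<Longrightarrow> j < N \<Longrightarrow> k < N \<Longrightarrow> u h * w ^ k * \<psi> k (i, j) = \<psi> k (i, j) * (u f * w ^ i * (u g * w ^ j))"
    and B: "\<And>i j k. i < N \<Longrightarrow> j < N \<Longrightarrow> k < N \<Longrightarrow> v h * \<psi> (cpred k) (i, j) = \<psi> k (i, csucc j) * (u f * w ^ i * v g) + \<psi> k (csucc i, j) * v f"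
  shows "\<psi> \<in> Hom (TV f g) (V h)"
  unfolding Hom_def
proof (intro CollectI conjI ballI allI impI)
  fix p q assume "\<psi> p q \<noteq> 0" then show "p \<in> car (V h)" "q \<in> car (TV f g)" using supported[of p q] by (cases q; auto)+
next
  fix p q assume q: "q \<in> car (TV f g)" and p: "p \<in> car (V h)"
  obtain i j where ij: "q = (i, j)" "i < N" "j < N" using q by auto
  have pN: "p < N" using p by simp
  show "mcomp (car (V h)) (actA (V h)) \<psi> p q = mcomp (car (TV f g)) \<psi> (actA (TV f g)) p q"
    unfolding car_TV car_V ij(1) mcomp_TA_right[OF ij(2,3)] mcomp_A_left[OF pN] by (rule A[OF ij(2,3) pN])
  show "mcomp (car (V h)) (actB (V h)) \<psi> p q = mcomp (car (TV f g)) \<psi> (actB (TV f g)) p q"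
    unfolding car_TV car_V ij(1) mcomp_TB_right[OF ij(2,3)] mcomp_B_left[OF pN] by (rule B[OF ij(2,3) pN])
qed

(* The slice of phi at weight k + t: the vector i -> phi(w_i (x) w_j, w_k) with i + j = k + t.
   The b-relation says that b (i.e. a A + b B with a = u_f v_g, b = v_f) maps slice k to
   v_h times slice k+1. *)
definition slice :: "((nat \<times> nat) \<Rightarrow> nat \<Rightarrow> complex) \<Rightarrow> nat \<Rightarrow> nat \<Rightarrow> nat \<Rightarrow> complex" where
  "slice \<phi> t k = (\<lambda>i. if i < N then \<phi> (i, compl_idx (k + t) i) k else 0)"

lemma supported_slice: "supported (slice \<phi> t k)" by (simp add: supported_def slice_def)

lemma slice_step: assumes "\<phi> \<in> Hom (V h) (TV f g)" "k < N"
  shows "ab_op (u f * v g) (v f) (slice \<phi> t k) = (\<lambda>i. v h * slice \<phi> t (csucc k) i)"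
proof (rule ext)
  fix i show "ab_op (u f * v g) (v f) (slice \<phi> t k) i = v h * slice \<phi> t (csucc k) i"
  proof (cases "i < N")
    case False then show ?thesis by (simp add: ab_op_def slice_def)
  next
    case i: True
    define j where "j = compl_idx (Suc (k + t)) i"
    have j: "j < N" by (simp add: j_def compl_idx_lt)
    have ij: "(i + j) mod N = Suc (k + t) mod N" using compl_idx_sum[OF i] by (simp add: j_def)
    have pred_j: "cpred j = compl_idx (k + t) i"
      by (rule compl_idx_uniq[OF i cpred_lt]) (simp add: cpred_mod_add ij cpred_Suc_mod)
    have j_pred: "j = compl_idx (k + t) (cpred i)"
      by (rule compl_idx_uniq[OF cpred_lt j]) (simp add: cpred_mod_add' ij cpred_Suc_mod)
    have j_next: "compl_idx (csucc k + t) i = j" unfolding j_def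
      by (rule compl_idx_mod) (simp add: csucc_def mod_add_left_eq mod_Suc_eq)
    have "ab_op (u f * v g) (v f) (slice \<phi> t k) i = u f * w ^ i * v g * \<phi> (i, cpred j) k + v f * \<phi> (cpred i, j) k"
      using i cpred_lt[of i] by (simp add: ab_op_def slice_def pred_j j_pred[symmetric] algebra_simps)
    also have "\<dots> = \<phi> (i, j) (csucc k) * v h" by (rule Hom_tensor_relations(2)[OF assms(1) i j assms(2)])
    also have "\<dots> = v h * slice \<phi> t (csucc k) i" using i by (simp add: slice_def j_next)
    finally show ?thesis .
  qed
qed

(* Iterating: (a A + b B)^n maps slice k to v_h^n times slice k + n; for n = N the
   q-binomial theorem turns this into v_h^N = (u_f v_g)^N + v_f^N on nonzero slices. *)
lemma slice_iter: assumes "\<phi> \<in> Hom (V h) (TV f g)" "k < N"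
  shows "(ab_op (u f * v g) (v f) ^^ n) (slice \<phi> t k) = (\<lambda>i. v h ^ n * slice \<phi> t ((k + n) mod N) i)"
proof (induction n)
  case 0 then show ?case using assms(2) by simp
next
  case (Suc n)
  have kn: "(k + n) mod N < N" using Npos by simp
  have "(ab_op (u f * v g) (v f) ^^ Suc n) (slice \<phi> t k) = ab_op (u f * v g) (v f) (\<lambda>i. v h ^ n * slice \<phi> t ((k + n) mod N) i)"
    using Suc by simp
  also have "\<dots> = (\<lambda>i. v h ^ n * (v h * slice \<phi> t (csucc ((k + n) mod N)) i))"
    by (simp only: ab_op_scale slice_step[OF assms(1) kn])
  also have "csucc ((k + n) mod N) = (k + Suc n) mod N" by (simp add: csucc_def mod_Suc_eq)
  finally show ?case by (simp add: algebra_simps)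
qed

lemma slice_N: assumes "\<phi> \<in> Hom (V h) (TV f g)" "k < N"
  shows "((u f * v g) ^ N + v f ^ N) * slice \<phi> t k i = v h ^ N * slice \<phi> t k i"
proof -
  have "(ab_op (u f * v g) (v f) ^^ N) (slice \<phi> t k) i = v h ^ N * slice \<phi> t k i"
    using slice_iter[OF assms, of N t] assms(2) by simp
  then show ?thesis by (simp add: ab_op_N[OF supported_slice])
qed

(* A nonzero morphism V_h -> V_f (x) V_g forces h = fg: the a-relation gives u_h^N = u_f^N u_g^N,
   and N steps of the b-relation give v_h^N = (u_f v_g)^N + v_f^N. *)
lemma Hom_tensor_nonzero:
  assumes "\<phi> \<in> Hom (V h) (TV f g)" "\<phi> P k \<noteq> 0"
  shows "h = gmul f g"
proof -
  obtain i0 j0 where P: "P = (i0, j0)" by (cases P)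
  have b: "i0 < N" "j0 < N" "k < N" using Hom_tensor_support[OF assms] P by auto
  have nz: "\<phi> (i0, j0) k \<noteq> 0" using assms(2) P by simp
  have "u f * w ^ i0 * (u g * w ^ j0) = u h * w ^ k"
    using Hom_tensor_relations(1)[OF assms(1) b] nz by (simp add: algebra_simps)
  hence "(u f * w ^ i0 * (u g * w ^ j0)) ^ N = (u h * w ^ k) ^ N" by simp
  hence "u f ^ N * u g ^ N = u h ^ N" using wN
    by (simp add: power_mult_distrib power_mult[symmetric] mult.commute[of _ N]) (simp add: power_mult)
  hence y: "snd h = snd f * snd g" by (simp add: u_pow flip: of_real_mult)
  define t where "t = i0 + j0 + (N - k)"
  have "(i0 + j0) mod N = (k + t) mod N" using b by (simp add: t_def)
  hence jj: "compl_idx (k + t) i0 = j0" using compl_idx_uniq[OF b(1,2)] by simp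
  have "slice \<phi> t k i0 \<noteq> 0" using b nz by (simp add: slice_def jj)
  with slice_N[OF assms(1) b(3), of t i0] have "(u f * v g) ^ N + v f ^ N = v h ^ N" by simp
  hence "of_real (fst h) = complex_of_real (fst f + snd f * fst g)"
    by (simp add: v_pow u_pow power_mult_distrib algebra_simps)
  hence "fst h = fst f + snd f * fst g" using of_real_eq_iff by blast
  with y show ?thesis by (simp add: gmul_def prod_eq_iff)
qed

lemma Hom_tensor_zero:
  assumes "h \<noteq> gmul f g"
  shows "Hom (V h) (TV f g) = {\<lambda>_ _. 0}"
proof -
  have "\<phi> = (\<lambda>_ _. 0)" if "\<phi> \<in> Hom (V h) (TV f g)" for \<phi>
    using Hom_tensor_nonzero[OF that] assms by (auto simp: fun_eq_iff)
  then show ?thesis using Hom_zero by blast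
qed

(* For h = fg, the inclusions incl_r : V_h -> V_f (x) V_g (r < N) send w_k to the vectors
   whose weight-k slice is v_h^(-k) (a A + b B)^k e_r; proj_r goes back, using the
   complementary power (a A + b B)^(N-k). *)
definition incl :: "real \<times> real \<Rightarrow> real \<times> real \<Rightarrow> nat \<Rightarrow> (nat \<times> nat) \<Rightarrow> nat \<Rightarrow> complex" where
  "incl f g r = (\<lambda>P k. if fst P < N \<and> snd P < N \<and> k < N \<and> (fst P + snd P) mod N = k
     then inverse (v (gmul f g)) ^ k * (ab_op (u f * v g) (v f) ^^ k) (unit_vec r) (fst P) else 0)"

definition proj :: "real \<times> real \<Rightarrow> real \<times> real \<Rightarrow> nat \<Rightarrow> nat \<Rightarrow> (nat \<times> nat) \<Rightarrow> complex" where
  "proj f g r = (\<lambda>k P. if fst P < N \<and> snd P < N \<and> k < N \<and> (fst P + snd P) mod N = k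
     then v (gmul f g) ^ k * inverse (v (gmul f g)) ^ N * (ab_op (u f * v g) (v f) ^^ (N - k)) (unit_vec (fst P)) r else 0)"

lemma weight_eigenvalue:
  assumes "f \<in> Iset" "g \<in> Iset" "(i + j) mod N = k"
  shows "u f * w ^ i * (u g * w ^ j) = u (gmul f g) * w ^ k"
proof -
  have "w ^ (i + j) = w ^ k" using w_mod[of "i + j"] assms(3) by simp
  then show ?thesis using assms(1,2) u_gmul by (simp add: Iset_iff power_add algebra_simps)
qed

lemma ab_op_power_period:
  assumes "supported c"
  shows "(ab_op (u f * v g) (v f) ^^ (N + n)) c = (\<lambda>i. v (gmul f g) ^ N * (ab_op (u f * v g) (v f) ^^ n) c i)"
  by (simp add: funpow_add ab_op_N[OF supported_ab_op_power[OF assms]] vN_gmul)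

lemma incl_b_action:
  assumes ijk: "i < N" "j < N" "k < N" and s: "(i + j) mod N = csucc k"
  shows "u f * w ^ i * v g * incl f g r (i, cpred j) k + v f * incl f g r (cpred i, j) k
       = inverse (v (gmul f g)) ^ k * (ab_op (u f * v g) (v f) ^^ Suc k) (unit_vec r) i"
proof -
  let ?D = "\<lambda>n. (ab_op (u f * v g) (v f) ^^ n) (unit_vec r)"
  have pk: "cpred ((i + j) mod N) = k" using s cpred_csucc ijk by simp
  have "u f * w ^ i * v g * incl f g r (i, cpred j) k + v f * incl f g r (cpred i, j) k
      = inverse (v (gmul f g)) ^ k * (u f * v g * w ^ i * ?D k i + v f * ?D k (cpred i))"
    using ijk cpred_lt by (simp add: incl_def cpred_mod_add cpred_mod_add' pk algebra_simps)
  also have "u f * v g * w ^ i * ?D k i + v f * ?D k (cpred i) = ?D (Suc k) i"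
    using ijk by (simp add: ab_op_def algebra_simps)
  finally show ?thesis .
qed

(* The b-relation for incl_r; at k = N - 1 the cycle closes by ab_op_power_period. *)
lemma incl_b_relation:
  assumes "gmul f g \<in> Iset" "r < N" and ijk: "i < N" "j < N" "k < N"
  shows "u f * w ^ i * v g * incl f g r (i, cpred j) k + v f * incl f g r (cpred i, j) k
       = incl f g r (i, j) (csucc k) * v (gmul f g)"
proof (cases "(i + j) mod N = csucc k")
  case False
  hence "cpred ((i + j) mod N) \<noteq> k" using cpred_eq_csucc ijk Npos by simp
  then show ?thesis using False by (simp add: incl_def cpred_mod_add cpred_mod_add')
next
  case True
  let ?h = "gmul f g"
  let ?D = "\<lambda>n. (ab_op (u f * v g) (v f) ^^ n) (unit_vec r)"
  have vh: "v ?h \<noteq> 0" using assms(1) v_nz by (simp add: Iset_iff)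
  note L = incl_b_action[OF ijk True, where f=f and g=g and r=r]
  show ?thesis
  proof (cases "Suc k < N")
    case True
    hence "csucc k = Suc k" by (simp add: csucc_def)
    then show ?thesis using L ijk True \<open>(i + j) mod N = csucc k\<close> vh by (simp add: incl_def field_simps)
  next
    case False
    hence kN: "Suc k = N" using ijk by simp
    hence "csucc k = 0" by (simp add: csucc_def)
    hence R: "incl f g r (i, j) (csucc k) * v ?h = unit_vec r i * v ?h"
      using ijk \<open>(i + j) mod N = csucc k\<close> Npos by (simp add: incl_def)
    have "?D (Suc k) i = v ?h ^ Suc k * unit_vec r i"
      using kN ab_op_power_period[OF supported_unit_vec[OF assms(2)], where f=f and g=g and n=0] by simp
    hence "inverse (v ?h) ^ k * ?D (Suc k) i = v ?h * unit_vec r i"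
      using vh by (simp add: field_simps)
    then show ?thesis using L R vh by (simp add: ac_simps)
  qed
qed

lemma incl_Hom:
  assumes "f \<in> Iset" "g \<in> Iset" "gmul f g \<in> Iset" "r < N"
  shows "incl f g r \<in> Hom (V (gmul f g)) (TV f g)"
proof (rule Hom_tensorI)
  show "\<And>P k. incl f g r P k \<noteq> 0 \<Longrightarrow> fst P < N \<and> snd P < N \<and> k < N"
    by (simp add: incl_def split: if_splits)
  show "u f * w ^ i * (u g * w ^ j) * incl f g r (i, j) k = incl f g r (i, j) k * (u (gmul f g) * w ^ k)" for i j k
    using weight_eigenvalue[OF assms(1,2), of i j k] by (cases "(i + j) mod N = k") (simp_all add: incl_def)
qed (rule incl_b_relation[OF assms(3,4)])

lemma proj_b_action:
  assumes ijk: "i < N" "j < N" "k < N" and s: "csucc ((i + j) mod N) = k"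
  shows "proj f g r k (i, csucc j) * (u f * w ^ i * v g) + proj f g r k (csucc i, j) * v f
       = v (gmul f g) ^ k * inverse (v (gmul f g)) ^ N * (ab_op (u f * v g) (v f) ^^ Suc (N - k)) (unit_vec i) r"
proof -
  let ?E = "\<lambda>n x. (ab_op (u f * v g) (v f) ^^ n) (unit_vec x) r"
  have "proj f g r k (i, csucc j) * (u f * w ^ i * v g) + proj f g r k (csucc i, j) * v f
      = v (gmul f g) ^ k * inverse (v (gmul f g)) ^ N * (u f * v g * w ^ i * ?E (N - k) i + v f * ?E (N - k) (csucc i))"
    using ijk csucc_lt s by (simp add: proj_def csucc_mod_add csucc_mod_add' algebra_simps)
  also have "u f * v g * w ^ i * ?E (N - k) i + v f * ?E (N - k) (csucc i) = ?E (Suc (N - k)) i"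
    using ab_op_power_step[OF ijk(1), where a="u f * v g" and b="v f" and n="N - k" and l=r]
    by (simp add: funpow_Suc_right del: funpow.simps)
  finally show ?thesis .
qed

(* The b-relation for proj_r; at k = 0 the cycle closes by ab_op_power_period. *)
lemma proj_b_relation:
  assumes "gmul f g \<in> Iset" "r < N" and ijk: "i < N" "j < N" "k < N"
  shows "v (gmul f g) * proj f g r (cpred k) (i, j)
       = proj f g r k (i, csucc j) * (u f * w ^ i * v g) + proj f g r k (csucc i, j) * v f"
proof (cases "csucc ((i + j) mod N) = k")
  case False
  hence "(i + j) mod N \<noteq> cpred k" using csucc_cpred ijk by auto
  then show ?thesis using False by (simp add: proj_def csucc_mod_add csucc_mod_add')
next
  case True
  let ?h = "gmul f g"
  let ?E = "\<lambda>n x. (ab_op (u f * v g) (v f) ^^ n) (unit_vec x) r"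
  have vh: "v ?h \<noteq> 0" using assms(1) v_nz by (simp add: Iset_iff)
  have s: "(i + j) mod N = cpred k" using True cpred_csucc[of "(i + j) mod N"] Npos by auto
  note R = proj_b_action[OF ijk True, where f=f and g=g and r=r]
  show ?thesis
  proof (cases k)
    case (Suc k')
    hence pk: "cpred k = k'" using ijk by (simp add: cpred_eq)
    have "N - k' = Suc (N - k)" using Suc ijk by simp
    then show ?thesis using R ijk s pk Suc by (simp add: proj_def)
  next
    case 0
    hence pk: "cpred k = N - 1" using ijk by (simp add: cpred_eq)
    have "v ?h * v ?h ^ (N - 1) = v ?h ^ N" using Npos by (cases N) simp_all
    hence L: "v ?h * proj f g r (cpred k) (i, j) = ?E 1 i"
      using ijk s pk Npos vh by (simp add: proj_def field_simps)
    have "?E (Suc (N - k)) i = v ?h ^ N * ?E 1 i"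
      using 0 ab_op_power_period[OF supported_unit_vec[OF ijk(1)], where f=f and g=g and n=1] by simp
    then show ?thesis using R L 0 vh by (simp add: field_simps)
  qed
qed

lemma proj_Hom:
  assumes "f \<in> Iset" "g \<in> Iset" "gmul f g \<in> Iset" "r < N"
  shows "proj f g r \<in> Hom (TV f g) (V (gmul f g))"
proof (rule Hom_from_tensorI)
  show "\<And>k P. proj f g r k P \<noteq> 0 \<Longrightarrow> fst P < N \<and> snd P < N \<and> k < N"
    by (simp add: proj_def split: if_splits)
  show "u (gmul f g) * w ^ k * proj f g r k (i, j) = proj f g r k (i, j) * (u f * w ^ i * (u g * w ^ j))" for i j k
    using weight_eigenvalue[OF assms(1,2), of i j k] by (cases "(i + j) mod N = k") (simp_all add: proj_def)
qed (rule proj_b_relation[OF assms(3,4)])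

lemma ab_op_power_compose:
  assumes "i' < N"
  shows "(\<Sum>r<N. (ab_op a b ^^ m) (unit_vec i') r * (ab_op a b ^^ n) (unit_vec r) i)
       = (ab_op a b ^^ (n + m)) (unit_vec i') i"
proof -
  have "(ab_op a b ^^ (n + m)) (unit_vec i') = (ab_op a b ^^ n) ((ab_op a b ^^ m) (unit_vec i'))"
    by (simp add: funpow_add)
  also have "\<dots> = (\<lambda>i. \<Sum>r<N. (ab_op a b ^^ m) (unit_vec i') r * (ab_op a b ^^ n) (unit_vec r) i)"
    by (rule ab_op_lin[OF supported_ab_op_power[OF supported_unit_vec[OF assms]]])
  finally show ?thesis by (simp add: mult.commute)
qed

lemma same_weight_eq:
  assumes "i < N" "j < N" "j' < N" "(i + j) mod N = (i + j') mod N"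
  shows "j = j'"
  using compl_idx_uniq[OF assms(1,2)] compl_idx_uniq[OF assms(1,3)] assms(4) by metis

(* On the weight space s, sum_r incl_r proj_r is v_fg^(-N) (a A + b B)^N = Id by the
   q-binomial theorem. *)
lemma incl_proj_weight_space:
  assumes h: "gmul f g \<in> Iset" and b: "i < N" "j < N" "i' < N" "j' < N"
    and s: "s = (i + j) mod N" "(i' + j') mod N = s"
  shows "(\<Sum>r<N. incl f g r (i, j) s * proj f g r s (i', j')) = mid ({..<N} \<times> {..<N}) (i, j) (i', j')"
proof -
  let ?h = "gmul f g"
  let ?M = "ab_op (u f * v g) (v f)"
  have vh: "v ?h \<noteq> 0" using h v_nz by (simp add: Iset_iff)
  have sN: "s < N" using Npos s by simp
  have "(\<Sum>r<N. incl f g r (i, j) s * proj f g r s (i', j'))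
      = (\<Sum>r<N. inverse (v ?h) ^ N * ((?M ^^ (N - s)) (unit_vec i') r * (?M ^^ s) (unit_vec r) i))"
    by (rule sum.cong) (use b s sN vh in \<open>simp_all add: incl_def proj_def field_simps\<close>)
  also have "\<dots> = inverse (v ?h) ^ N * (?M ^^ N) (unit_vec i') i"
    using ab_op_power_compose[OF b(3), where a="u f * v g" and b="v f" and m="N - s" and n=s and i=i] sN
    by (simp add: sum_distrib_left[symmetric])
  also have "\<dots> = unit_vec i' i"
    using vh by (simp only: ab_op_N_unit_vec[OF b(3)] vN_gmul[symmetric]) (simp add: field_simps)
  also have "\<dots> = mid ({..<N} \<times> {..<N}) (i, j) (i', j')"
  proof -
    have "i = i' \<Longrightarrow> j = j'" using same_weight_eq[of i j j'] b s by simp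
    then show ?thesis using b by (auto simp: unit_vec_def mid_def)
  qed
  finally show ?thesis .
qed

(* sum_r incl_r proj_r = Id on V_f (x) V_g, entrywise; both sides vanish between different weights. *)
lemma incl_proj_entry:
  assumes "gmul f g \<in> Iset"
  shows "(\<Sum>r<N. mcomp {..<N} (incl f g r) (proj f g r) P Q) = mid ({..<N} \<times> {..<N}) P Q"
proof -
  obtain i j i' j' where PQ: "P = (i, j)" "Q = (i', j')" by (cases P, cases Q)
  show ?thesis
  proof (cases "i < N \<and> j < N \<and> i' < N \<and> j' < N")
    case False
    hence "\<And>r. mcomp {..<N} (incl f g r) (proj f g r) P Q = 0" unfolding mcomp_def
      using PQ by (intro sum.neutral) (auto simp: incl_def proj_def)
    moreover have "mid ({..<N} \<times> {..<N}) P Q = 0" using False PQ by (auto simp: mid_def)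
    ultimately show ?thesis by simp
  next
    case True
    hence b: "i < N" "j < N" "i' < N" "j' < N" by auto
    define s where "s = (i + j) mod N"
    have sN: "s < N" using Npos by (simp add: s_def)
    have inner: "mcomp {..<N} (incl f g r) (proj f g r) P Q = incl f g r P s * proj f g r s Q" for r
      unfolding mcomp_def PQ using sN b by (subst sum_single[where a=s]) (auto simp: incl_def s_def)
    show ?thesis
    proof (cases "(i' + j') mod N = s")
      case False
      hence "proj f g r s Q = 0" for r using PQ by (simp add: proj_def)
      moreover have "mid ({..<N} \<times> {..<N}) P Q = 0" using False PQ by (auto simp: mid_def s_def)
      ultimately show ?thesis by (simp add: inner)
    next
      case True
      have "(\<Sum>r<N. mcomp {..<N} (incl f g r) (proj f g r) P Q) = (\<Sum>r<N. incl f g r P s * proj f g r s Q)"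
        by (simp only: inner)
      then show ?thesis using incl_proj_weight_space[OF assms b s_def True] by (simp only: PQ)
    qed
  qed
qed

lemma identity_decomposition:
  assumes "gmul f g \<in> Iset"
  shows "mid (car (V f) \<times> car (V g))
       = sum_list (map (\<lambda>(k, x, y). mcomp (car (V k)) x y) (map (\<lambda>r. (gmul f g, incl f g r, proj f g r)) [0..<N]))"
proof -
  have "sum_list (map (\<lambda>(k, x, y). mcomp (car (V k)) x y) (map (\<lambda>r. (gmul f g, incl f g r, proj f g r)) [0..<N]))
      = (\<Sum>r<N. mcomp {..<N} (incl f g r) (proj f g r))"
    by (simp add: interv_sum_list_conv_sum_set_nat atLeast0LessThan comp_def)
  then show ?thesis using incl_proj_entry[OF assms] by (simp add: fun_eq_iff sum_apply2)
qed

(* incl_r sends w_0 to sum_i e_r(i) w_i (x) w_(-i): the incl_r are separated at w_0. *)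
lemma incl_at_w0: "i < N \<Longrightarrow> incl f g r (i, compl_idx 0 i) 0 = unit_vec r i"
  using compl_idx_sum[of i 0] compl_idx_lt[of 0 i] Npos by (simp add: incl_def unit_vec_def)

lemma incl_inj: "inj_on (incl f g) {..<N}"
proof (rule inj_onI)
  fix r r' assume r: "r \<in> {..<N}" "r' \<in> {..<N}" and e: "incl f g r = incl f g r'"
  have "incl f g r (r, compl_idx 0 r) 0 = incl f g r' (r, compl_idx 0 r) 0" using e by simp
  then show "r = r'" using r by (simp add: incl_at_w0 unit_vec_def split: if_splits)
qed

lemma incl_independent: "\<not> module.dependent mscale (incl f g ` {..<N})"
proof -
  interpret vector_space "mscale :: complex \<Rightarrow> ((nat \<times> nat) \<Rightarrow> nat \<Rightarrow> complex) \<Rightarrow> _"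
    by (rule vector_space_mscale)
  show ?thesis
  proof (rule independent_if_scalars_zero)
    show "finite (incl f g ` {..<N})" by simp
    fix c x assume s: "(\<Sum>v\<in>incl f g ` {..<N}. mscale (c v) v) = 0" and x: "x \<in> incl f g ` {..<N}"
    obtain r where r: "r < N" "x = incl f g r" using x by auto
    have "(\<Sum>v\<in>incl f g ` {..<N}. mscale (c v) v) (r, compl_idx 0 r) 0 = 0" using s by simp
    hence "(\<Sum>r'<N. c (incl f g r') * incl f g r' (r, compl_idx 0 r) 0) = 0"
      by (simp add: sum.reindex[OF incl_inj] sum_apply2 mscale_def)
    moreover have "(\<Sum>r'<N. c (incl f g r') * incl f g r' (r, compl_idx 0 r) 0) = c (incl f g r)"
      using r by (simp add: incl_at_w0 unit_vec_def if_distrib[of "\<lambda>z. _ * z"] cong: if_cong)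
    ultimately show "c x = 0" using r by simp
  qed
qed

(* A morphism V_fg -> V_f (x) V_g is supported on the weight spaces i + j = k,
   because a acts there by u_f u_g varpi^(i+j) = u_fg varpi^(i+j). *)
lemma Hom_tensor_weight:
  assumes "f \<in> Iset" "g \<in> Iset" "\<phi> \<in> Hom (V (gmul f g)) (TV f g)" "\<phi> (i, j) k \<noteq> 0"
  shows "i < N \<and> j < N \<and> k < N \<and> (i + j) mod N = k"
proof -
  have b: "i < N" "j < N" "k < N" using Hom_tensor_support[OF assms(3,4)] by auto
  have un: "u f \<noteq> 0" "u g \<noteq> 0" using assms(1,2) u_nz by (auto simp: Iset_iff)
  have "u f * w ^ i * (u g * w ^ j) = u (gmul f g) * w ^ k"
    using Hom_tensor_relations(1)[OF assms(3) b] assms(4) by (simp add: algebra_simps)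
  then have "w ^ (i + j) = w ^ k"
    using assms(1,2) un u_gmul by (simp add: Iset_iff power_add algebra_simps)
  then show ?thesis using b by (simp add: w_eq_iff)
qed

(* A morphism V_fg -> V_f (x) V_g is determined by its values at w_0:
   phi = sum_r phi(w_r (x) w_(-r), w_0) incl_r, by iterating the b-relation (slice_iter). *)
lemma Hom_tensor_expansion:
  assumes "f \<in> Iset" "g \<in> Iset" "gmul f g \<in> Iset" "\<phi> \<in> Hom (V (gmul f g)) (TV f g)"
  shows "\<phi> = (\<lambda>P k. \<Sum>r<N. \<phi> (r, compl_idx 0 r) 0 * incl f g r P k)"
proof (intro ext)
  fix P :: "nat \<times> nat" and k :: nat
  let ?h = "gmul f g"
  let ?M = "ab_op (u f * v g) (v f)"
  obtain i j where P: "P = (i, j)" by (cases P)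
  show "\<phi> P k = (\<Sum>r<N. \<phi> (r, compl_idx 0 r) 0 * incl f g r P k)"
  proof (cases "i < N \<and> j < N \<and> k < N \<and> (i + j) mod N = k")
    case False
    hence "\<phi> P k = 0" using Hom_tensor_weight[OF assms(1,2,4), of i j k] P by auto
    moreover have "incl f g r P k = 0" for r using False P by (auto simp: incl_def)
    ultimately show ?thesis by simp
  next
    case True
    hence b: "i < N" "j < N" "k < N" and s: "(i + j) mod N = k" by auto
    have vh: "v ?h \<noteq> 0" using assms(3) v_nz by (simp add: Iset_iff)
    have "(\<Sum>r<N. \<phi> (r, compl_idx 0 r) 0 * incl f g r P k)
        = inverse (v ?h) ^ k * (\<Sum>r<N. slice \<phi> 0 0 r * (?M ^^ k) (unit_vec r) i)"
      using P b s by (simp add: incl_def slice_def sum_distrib_left algebra_simps)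
    also have "(\<Sum>r<N. slice \<phi> 0 0 r * (?M ^^ k) (unit_vec r) i) = (?M ^^ k) (slice \<phi> 0 0) i"
      by (simp add: ab_op_lin[OF supported_slice])
    also have "\<dots> = v ?h ^ k * slice \<phi> 0 k i"
      using slice_iter[OF assms(4) Npos, of k 0] b by simp
    also have "slice \<phi> 0 k i = \<phi> P k"
      using compl_idx_uniq[OF b(1,2), of k] s b P by (simp add: slice_def)
    finally show ?thesis using vh by (simp add: field_simps)
  qed
qed

lemma cdim_Hom_tensor:
  assumes "f \<in> Iset" "g \<in> Iset" "gmul f g \<in> Iset"
  shows "cdim (Hom (V (gmul f g)) (TV f g)) = N"
proof -
  interpret vector_space "mscale :: complex \<Rightarrow> ((nat \<times> nat) \<Rightarrow> nat \<Rightarrow> complex) \<Rightarrow> _"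
    by (rule vector_space_mscale)
  have "dim (Hom (V (gmul f g)) (TV f g)) = N"
  proof (rule dim_unique[of "incl f g ` {..<N}"])
    show "incl f g ` {..<N} \<subseteq> Hom (V (gmul f g)) (TV f g)" using incl_Hom[OF assms] by auto
    show "card (incl f g ` {..<N}) = N" using incl_inj by (simp add: card_image)
    show "independent (incl f g ` {..<N})" by (rule incl_independent)
    show "Hom (V (gmul f g)) (TV f g) \<subseteq> span (incl f g ` {..<N})"
    proof
      fix \<phi> assume phi: "\<phi> \<in> Hom (V (gmul f g)) (TV f g)"
      have "(\<Sum>r<N. mscale (\<phi> (r, compl_idx 0 r) 0) (incl f g r)) \<in> span (incl f g ` {..<N})"
        by (intro span_sum span_scale span_base) auto
      moreover have "(\<Sum>r<N. mscale (\<phi> (r, compl_idx 0 r) 0) (incl f g r)) = \<phi>"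
        by (subst Hom_tensor_expansion[OF assms phi]) (simp add: fun_eq_iff sum_apply2 mscale_def)
      ultimately show "\<phi> \<in> span (incl f g ` {..<N})" by simp
    qed
  qed
  then show ?thesis by (simp add: cdim_mscale)
qed

lemma Phi_nz: "Phi w eps h m \<noteq> 0"
  using epsg_nz w_nz by (simp add: Phi_def)

(* Phi_{g,N} = 1, i.e. (-eps_g)^N varpi^(N(N-1)/2) = 1: for even N, varpi^(N/2) = -1. *)
lemma Phi_at_N: "(- epsg eps h) ^ N * w ^ (N * (N - 1) div 2) = 1"
proof (cases "even N")
  case True
  then obtain k where N: "N = 2 * k" by blast
  have "N * (N - 1) div 2 = k * (N - 1)" using N by simp
  hence "w ^ (N * (N - 1) div 2) = (w ^ k) ^ (N - 1)" by (simp add: power_mult)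
  also have "\<dots> = -1" using w_half[OF N] True Npos by (simp add: N)
  finally show ?thesis using True epsg_N by (simp add: power_minus')
next
  case False
  then obtain k where N: "N = 2 * k + 1" using oddE by blast
  have "N * (N - 1) div 2 = N * k" using N by simp
  hence "w ^ (N * (N - 1) div 2) = 1" using wN by (simp add: power_mult)
  then show ?thesis using False epsg_N by (simp add: power_minus')
qed

lemma Phi_csucc: assumes "m < N" shows "Phi w eps h (csucc m) = - epsg eps h * w ^ m * Phi w eps h m"
proof (cases "Suc m < N")
  case True
  hence csucc: "csucc m = Suc m" by (simp add: csucc_def)
  have t: "w ^ (Suc m * (Suc m - 1) div 2) = w ^ m * w ^ (m * (m - 1) div 2)"
    by (simp only: diff_Suc_1 tri power_add)
  show ?thesis unfolding Phi_def csucc t by (simp only: power_Suc) (simp add: algebra_simps)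
next
  case False
  hence m: "Suc m = N" using assms by simp
  hence "csucc m = 0" by (simp add: csucc_def)
  hence "Phi w eps h (csucc m) = 1" by (simp add: Phi_def)
  also have "1 = (- epsg eps h) ^ Suc m * w ^ (Suc m * m div 2)" using Phi_at_N[of h] by (simp add: m[symmetric])
  also have "\<dots> = - epsg eps h * w ^ m * Phi w eps h m"
  proof -
    have t: "w ^ (Suc m * m div 2) = w ^ m * w ^ (m * (m - 1) div 2)"
      by (simp only: tri power_add)
    show ?thesis unfolding Phi_def t by (simp only: power_Suc) (simp add: algebra_simps)
  qed
  finally show ?thesis .
qed

(* The relations making d_g and b_g intertwine b. *)
lemma Phi_relation:
  assumes g: "g \<in> Iset" and i: "i < N"
  shows "Phi w eps g i * (u g * w ^ i * v (ginv g)) + Phi w eps g (csucc i) * v g = 0"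
  using Phi_csucc[OF i, of g] uv_ginv[OF g] by (simp add: algebra_simps)

lemma Phibar_relation:
  assumes g: "g \<in> Iset" and i: "i < N"
  shows "u g * w ^ i * v (ginv g) * Phibar w eps (ginv g) ((N - i) mod N)
       + v g * Phibar w eps (ginv g) (csucc ((N - i) mod N)) = 0"
proof -
  define m where "m = (N - i) mod N"
  have m: "m < N" using Npos by (simp add: m_def)
  have wm: "w ^ i * w ^ m = 1" using w_pow_neg[OF i] by (simp add: m_def)
  have P1: "Phi w eps (ginv g) (csucc m) = - inverse (epsg eps g) * w ^ m * Phi w eps (ginv g) m"
    using Phi_csucc[OF m, of "ginv g"] epsg_ginv[OF g] by simp
  have nz: "Phi w eps (ginv g) m \<noteq> 0" "w \<noteq> 0" "epsg eps g \<noteq> 0" using Phi_nz w_nz epsg_nz by auto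
  have "u g * w ^ i * v (ginv g) * Phibar w eps (ginv g) m + v g * Phibar w eps (ginv g) (csucc m)
      = epsg eps g * v g * (w ^ i - inverse (w ^ m)) / Phi w eps (ginv g) m"
    unfolding Phibar_def P1 using nz uv_ginv[OF g] by (simp add: field_simps)
  also have "w ^ i - inverse (w ^ m) = 0" using wm nz by (simp add: field_simps)
  finally show ?thesis by (simp add: m_def)
qed

lemma bmap_Hom: assumes g: "g \<in> Iset" shows "bmap N w eps g \<in> Hom unitrep (TV g (ginv g))"
  unfolding Hom_def
proof (intro CollectI conjI ballI allI impI)
  let ?B = "bmap N w eps g"
  let ?g' = "ginv g"
  fix p q assume "?B p q \<noteq> 0" then show "p \<in> car (TV g ?g')" "q \<in> car unitrep"
    by (auto simp: bmap_def split: prod.splits if_splits)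
next
  let ?B = "bmap N w eps g"
  let ?g' = "ginv g"
  fix p q assume p: "p \<in> car (TV g ?g')" and q: "q \<in> car unitrep"
  obtain i j where ij: "p = (i, j)" "i < N" "j < N" using p by auto
  have qq: "q = ()" by simp
  show "mcomp (car (TV g ?g')) (actA (TV g ?g')) ?B p q = mcomp (car unitrep) ?B (actA unitrep) p q"
    unfolding car_TV ij(1) mcomp_TA_left[OF ij(2,3)]
    using w_pow_neg[OF ij(2)] u_ginv[OF g] ij(2,3) qq unfolding mcomp_def
    by (auto simp: bmap_def algebra_simps)
  show "mcomp (car (TV g ?g')) (actB (TV g ?g')) ?B p q = mcomp (car unitrep) ?B (actB unitrep) p q"
  proof -
    define m where "m = (N - i) mod N"
    have m: "m < N" using Npos by (simp add: m_def)
    have rhs: "mcomp (car unitrep) ?B (actB unitrep) (i, j) q = 0" by (simp add: mcomp_def)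
    have e1: "?B (i, cpred j) q = (if j = csucc m then Phibar w eps ?g' m else 0)"
      using ij cpred_lt[of j] cpred_eq_csucc[OF ij(3) m] cpred_iff_csucc[OF ij(3) m] by (auto simp: bmap_def m_def)
    have e2: "?B (cpred i, j) q = (if j = csucc m then Phibar w eps ?g' (csucc m) else 0)"
      using ij cpred_lt[of i] N_cpred[OF ij(2)] by (auto simp: bmap_def m_def)
    show ?thesis unfolding rhs car_TV ij(1) mcomp_TB_left[OF ij(2,3)] e1 e2 using Phibar_relation[OF g ij(2)] by (auto simp: m_def)
  qed
qed

lemma dmap_Hom: assumes g: "g \<in> Iset" shows "dmap N w eps g \<in> Hom (TV g (ginv g)) unitrep"
  unfolding Hom_def
proof (intro CollectI conjI ballI allI impI)
  let ?D = "dmap N w eps g"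
  let ?g' = "ginv g"
  fix p q assume "?D p q \<noteq> 0" then show "p \<in> car unitrep" "q \<in> car (TV g ?g')"
    by (auto simp: dmap_def split: prod.splits if_splits)
next
  let ?D = "dmap N w eps g"
  let ?g' = "ginv g"
  fix p q assume p: "p \<in> car unitrep" and q: "q \<in> car (TV g ?g')"
  obtain i j where ij: "q = (i, j)" "i < N" "j < N" using q by auto
  show "mcomp (car unitrep) (actA unitrep) ?D p q = mcomp (car (TV g ?g')) ?D (actA (TV g ?g')) p q"
  proof -
    have l: "mcomp (car unitrep) (actA unitrep) ?D p (i, j) = ?D p (i, j)" unfolding mcomp_def by (simp add: UNIV_unit)
    have "w ^ i * w ^ j = 1" if "(i + j) mod N = 0"
    proof -
      have "j = (N - i) mod N" using compl_idx_uniq[OF ij(2,3), of 0] that by (simp add: compl_idx_def)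
      then show ?thesis using w_pow_neg[OF ij(2)] by simp
    qed
    then show ?thesis unfolding l car_TV ij(1) mcomp_TA_right[OF ij(2,3)]
      using u_ginv[OF g] ij by (auto simp: dmap_def algebra_simps)
  qed
  show "mcomp (car unitrep) (actB unitrep) ?D p q = mcomp (car (TV g ?g')) ?D (actB (TV g ?g')) p q"
  proof -
    have l: "mcomp (car unitrep) (actB unitrep) ?D p (i, j) = 0" by (simp add: mcomp_def)
    have e1: "?D p (i, csucc j) = (if csucc ((i + j) mod N) = 0 then Phi w eps g i else 0)"
      using ij csucc_lt by (simp add: dmap_def csucc_mod_add)
    have e2: "?D p (csucc i, j) = (if csucc ((i + j) mod N) = 0 then Phi w eps g (csucc i) else 0)"
      using ij csucc_lt by (simp add: dmap_def csucc_mod_add')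
    show ?thesis unfolding l car_TV ij(1) mcomp_TB_right[OF ij(2,3)] e1 e2 using Phi_relation[OF g ij(2)] by auto
  qed
qed

(* The snake identities reduce, via snake_left_coords / snake_right_coords, to
   sum_b d(b, q) b(p, b) = delta_pq, which holds since Phi_{g^*, -p} Phibar_{g^*, -p} = 1. *)
lemma snake_left_V: assumes g: "g \<in> Iset"
  shows "(if p \<in> {..<N} \<and> q \<in> {..<N} then (\<Sum>b\<in>{..<N}. dmap N w eps (ginv g) () (b, q) * bmap N w eps g (p, b) ()) else 0) = mid {..<N} p q"
proof (cases "p < N \<and> q < N")
  case False then show ?thesis by (auto simp: mid_def)
next
  case True
  define m where "m = (N - p) mod N"
  have m: "m < N" using Npos by (simp add: m_def)
  have "(\<Sum>b\<in>{..<N}. dmap N w eps (ginv g) () (b, q) * bmap N w eps g (p, b) ())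
      = dmap N w eps (ginv g) () (m, q) * Phibar w eps (ginv g) m"
    using True m by (subst sum_single[where a=m]) (auto simp: bmap_def m_def)
  also have "\<dots> = (if q = p then 1 else 0)"
  proof -
    have "(m + q) mod N = 0 \<longleftrightarrow> q = p"
    proof
      assume "(m + q) mod N = 0"
      hence "q = compl_idx 0 m" using compl_idx_uniq[OF m, of q 0] True by simp
      moreover have "p = compl_idx 0 m"
        using compl_idx_uniq[OF m, of p 0] True by (simp add: m_def mod_add_left_eq)
      ultimately show "q = p" by simp
    next
      assume "q = p" then show "(m + q) mod N = 0" using True by (simp add: m_def mod_add_left_eq)
    qed
    then show ?thesis using True m Phi_nz by (simp add: dmap_def Phibar_def)
  qed
  finally show ?thesis using True by (simp add: mid_def)
qed

lemma snake_right_V: assumes g: "g \<in> Iset"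
  shows "(if p \<in> {..<N} \<and> q \<in> {..<N} then (\<Sum>b\<in>{..<N}. dmap N w eps g () (q, b) * bmap N w eps (ginv g) (b, p) ()) else 0) = mid {..<N} p q"
proof (cases "p < N \<and> q < N")
  case False then show ?thesis by (auto simp: mid_def)
next
  case True
  define b where "b = (N - q) mod N"
  have b: "b < N" using Npos by (simp add: b_def)
  have bq: "(N - b) mod N = q" using True Npos by (cases q) (auto simp: b_def)
  have qb: "(q + b) mod N = 0" using True by (simp add: b_def mod_add_right_eq)
  have "(\<Sum>b'\<in>{..<N}. dmap N w eps g () (q, b') * bmap N w eps (ginv g) (b', p) ())
      = Phi w eps g q * bmap N w eps (ginv g) (b, p) ()"
  proof (subst sum_single[where a=b])
    show "\<And>r. r \<in> {..<N} \<Longrightarrow> r \<noteq> b \<Longrightarrow> dmap N w eps g () (q, r) * bmap N w eps (ginv g) (r, p) () = 0"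
    proof -
      fix r assume "r \<in> {..<N}" "r \<noteq> b"
      hence "(q + r) mod N \<noteq> 0" using compl_idx_uniq[OF _ _, of q r 0] True by (auto simp: b_def compl_idx_def)
      then show "dmap N w eps g () (q, r) * bmap N w eps (ginv g) (r, p) () = 0" by (simp add: dmap_def)
    qed
  qed (use b True qb in \<open>auto simp: dmap_def\<close>)
  also have "\<dots> = (if q = p then 1 else 0)"
    using True b bq Phi_nz ginv_ginv[OF g] by (auto simp: bmap_def Phibar_def)
  finally show ?thesis using True by (auto simp: mid_def)
qed

lemma psi_simple_modules: "\<forall>i\<in>Iset. is_module w (V i) \<and> simple (V i)"
  using module_V simple_V by (auto simp: Iset_iff)

lemma psi_Hom_distinct: "\<forall>i\<in>Iset. \<forall>j\<in>Iset. i \<noteq> j \<longrightarrow> Hom (V i) (V j) = {\<lambda>_ _. 0}"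
proof (intro ballI impI)
  fix i j assume ij: "i \<in> Iset" "j \<in> Iset" "i \<noteq> j"
  have "\<phi> = (\<lambda>_ _. 0)" if "\<phi> \<in> Hom (V i) (V j)" for \<phi>
    using Hom_V_nonzero[OF that] ij(3) by (auto simp: fun_eq_iff)
  then show "Hom (V i) (V j) = {\<lambda>_ _. 0}" using Hom_zero by blast
qed

lemma psi_duality_morphisms:
  "\<forall>i\<in>Iset. bmap N w eps i \<in> Hom unitrep (TV i (ginv i)) \<and> dmap N w eps i \<in> Hom (TV i (ginv i)) unitrep"
  using bmap_Hom dmap_Hom by auto

lemma psi_snake_identities:
  "\<forall>i\<in>Iset. let S = car (V i); S' = car (V (ginv i)) in
        mcomp (S \<times> UNIV) (runit S)
          (mcomp (S \<times> S' \<times> S) (kron (mid S) (dmap N w eps (ginv i)))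
            (mcomp ((S \<times> S') \<times> S) (assoc (S \<times> S' \<times> S))
              (mcomp (UNIV \<times> S) (kron (bmap N w eps i) (mid S)) (lunit_inv S)))) = mid S
      \<and> mcomp (UNIV \<times> S) (lunit S)
          (mcomp ((S \<times> S') \<times> S) (kron (dmap N w eps i) (mid S))
            (mcomp (S \<times> S' \<times> S) (assoc_inv ((S \<times> S') \<times> S))
              (mcomp (S \<times> UNIV) (kron (mid S) (bmap N w eps (ginv i))) (runit_inv S)))) = mid S"
  using snake_left_coords[of "{..<N}" "{..<N}" "dmap N w eps (ginv _)" "bmap N w eps _"]
    snake_right_coords[of "{..<N}" "{..<N}" "dmap N w eps _" "bmap N w eps (ginv _)"]
    snake_left_V snake_right_V
  by (simp add: Let_def fun_eq_iff)

lemma psi_decomposition: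
  "\<forall>i\<in>Iset. \<forall>j\<in>Iset. (\<exists>k\<in>Iset. Hom (V k) (TV i j) \<noteq> {\<lambda>_ _. 0}) \<longrightarrow>
     (\<exists>L. (\<forall>(k, x, y)\<in>set L. k \<in> Iset \<and> x \<in> Hom (V k) (TV i j) \<and> y \<in> Hom (TV i j) (V k))
        \<and> mid (car (V i) \<times> car (V j)) = sum_list (map (\<lambda>(k, x, y). mcomp (car (V k)) x y) L))"
proof (intro ballI impI)
  fix i j assume ij: "i \<in> Iset" "j \<in> Iset" and "\<exists>k\<in>Iset. Hom (V k) (TV i j) \<noteq> {\<lambda>_ _. 0}"
  then have ijI: "gmul i j \<in> Iset" using Hom_tensor_zero[of _ i j] by metis
  let ?L = "map (\<lambda>r. (gmul i j, incl i j r, proj i j r)) [0..<N]"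
  have "\<forall>(k, x, y)\<in>set ?L. k \<in> Iset \<and> x \<in> Hom (V k) (TV i j) \<and> y \<in> Hom (TV i j) (V k)"
    using incl_Hom[OF ij ijI] proj_Hom[OF ij ijI] ijI by auto
  with identity_decomposition[OF ijI] show "\<exists>L. (\<forall>(k, x, y)\<in>set L. k \<in> Iset \<and> x \<in> Hom (V k) (TV i j) \<and> y \<in> Hom (TV i j) (V k))
        \<and> mid (car (V i) \<times> car (V j)) = sum_list (map (\<lambda>(k, x, y). mcomp (car (V k)) x y) L)"
    by blast
qed

lemma cdim_Hom_tensor_cases:
  assumes "f \<in> Iset" "g \<in> Iset" "h \<in> Iset"
  shows "cdim (Hom (V h) (TV f g)) = (if h = gmul f g then N else 0)"
  using cdim_Hom_tensor[OF assms(1,2)] Hom_tensor_zero[of h f g] cdim_zero assms(3) by auto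

end

theorem proposition12p1:
  fixes N :: nat and w eps :: complex
  assumes "N \<ge> 1"
    and "w ^ N = 1" and "\<forall>k. 0 < k \<and> k < N \<longrightarrow> w ^ k \<noteq> 1"
    and "eps ^ N = -1" and "odd N \<longrightarrow> eps = -1"
  shows "psi_system w Iset (Vmod N w eps) ginv (bmap N w eps) (dmap N w eps)
         \<and> (\<forall>f\<in>Iset. \<forall>g\<in>Iset. \<forall>h\<in>Iset.
              cdim (Hom (Vmod N w eps h) (tensor (Vmod N w eps f) (Vmod N w eps g)))
                = (if h = gmul f g then N else 0))"
proof -
  interpret primitive_root N w eps using assms by unfold_locales auto
  have "psi_system w Iset V ginv (bmap N w eps) (dmap N w eps)"
    unfolding psi_system_def
    using psi_simple_modules psi_Hom_distinct ginv_involution psi_duality_morphisms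
      psi_snake_identities psi_decomposition
    by blast
  then show ?thesis using cdim_Hom_tensor_cases by blast
qed

end
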